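(* Let $H:\mathbb{R}^4\to\mathbb{R}$ be $C^\infty$ with $H(0)=0$, $dH(0)=0$ and the origin a non-degenerate critical point; suppose the linearization $L$ of $\xi_H$ at the origin has eigenvalues $a,b,-a,-b$ ($a,b>0$) with eigenvectors $e_1,e_2,e_3,e_4$, that $a,b$ are linearly independent over $\mathbb{Q}$, and that each of $\{\pi_*e_1,\pi_*e_2\}$, $\{\pi_*e_3,\pi_*e_4\}$, $\{\pi_*e_1,\pi_*e_4\}$, $\{\pi_*e_2,\pi_*e_3\}$ is linearly independent. Let $z$ be a solution of $H(x,y,z_x,z_y)=0$ with $z(0,0)=z_x(0,0)=z_y(0,0)=0$ whose jet near the origin is either the stable or the unstable submanifold of $\xi_H$ at the origin. If $\tilde z$ is any $C^2$ solution with $\tilde z(0,0)=\tilde z_x(0,0)=\tilde z_y(0,0)=0$ whose jet is tangent to the jet of $z$ at the origin (equivalently $\tilde z_{xx},\tilde z_{xy},\tilde z_{yy}$ agree with $z_{xx},z_{xy},z_{yy}$ at $(0,0)$), then $\tilde z=z$ in a neighborhood of the origin.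
   Context: Coordinates $(x,y,p,q)$ on $\mathbb{R}^4$, $\pi(x,y,p,q)=(x,y)$. The characteristic vector field is $\xi_H=H_p\partial_x+H_q\partial_y-H_x\partial_p-H_y\partial_q$, with flow $\Phi_t$, and $L$ is its linearization at the origin. The stable (resp. unstable) submanifold at the origin is the set of points $P$ in a small neighborhood of the origin with $\Phi_t(P)\to0$ as $t\to+\infty$ (resp. $t\to-\infty$). The jet of $z$ is $\{(x,y,z_x,z_y)\}$. *)

theory Defs
  imports "HOL-Analysis.Analysis"
begin

type_synonym R4 = "real \<times> real \<times> real \<times> real"   (* points (x,y,p,q) *)
type_synonym R2 = "real \<times> real"

fun Ck_on :: "nat \<Rightarrow> 'a::euclidean_space set \<Rightarrow> ('a \<Rightarrow> real) \<Rightarrow> bool" where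
  "Ck_on 0 S f = continuous_on S f"
| "Ck_on (Suc k) S f =
     (f differentiable_on S \<and> (\<forall>i\<in>Basis. Ck_on k S (\<lambda>x. frechet_derivative f (at x) i)))"

definition smooth_on :: "'a::euclidean_space set \<Rightarrow> ('a \<Rightarrow> real) \<Rightarrow> bool" where
  "smooth_on S f \<longleftrightarrow> (\<forall>k. Ck_on k S f)"

definition pd :: "('a::real_normed_vector \<Rightarrow> real) \<Rightarrow> 'a \<Rightarrow> 'a \<Rightarrow> real" where
  "pd f v P = frechet_derivative f (at P) v"

definition pd2 :: "('a::real_normed_vector \<Rightarrow> real) \<Rightarrow> 'a \<Rightarrow> 'a \<Rightarrow> 'a \<Rightarrow> real" where
  "pd2 f u v P = frechet_derivative (\<lambda>Q. frechet_derivative f (at Q) v) (at P) u"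

definition ex4 :: R4 where "ex4 = (1,0,0,0)"
definition ey4 :: R4 where "ey4 = (0,1,0,0)"
definition ep4 :: R4 where "ep4 = (0,0,1,0)"
definition eq4 :: R4 where "eq4 = (0,0,0,1)"
definition ex2 :: R2 where "ex2 = (1,0)"
definition ey2 :: R2 where "ey2 = (0,1)"

text \<open>Projection pi(x,y,p,q) = (x,y); it is linear, so pi_* = pi.\<close>
definition proj :: "R4 \<Rightarrow> R2" where
  "proj P = (fst P, fst (snd P))"

definition xiH :: "(R4 \<Rightarrow> real) \<Rightarrow> R4 \<Rightarrow> R4" where
  "xiH H P = (pd H ep4 P, pd H eq4 P, - pd H ex4 P, - pd H ey4 P)"

definition nondeg_critical_0 :: "(R4 \<Rightarrow> real) \<Rightarrow> bool" where
  "nondeg_critical_0 H \<longleftrightarrow>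
     (\<forall>v. pd H v 0 = 0) \<and> (\<forall>u. (\<forall>v. pd2 H u v 0 = 0) \<longrightarrow> u = 0)"

definition lin_indep2 :: "R2 \<Rightarrow> R2 \<Rightarrow> bool" where
  "lin_indep2 u v \<longleftrightarrow> (\<forall>c d::real. c *\<^sub>R u + d *\<^sub>R v = 0 \<longrightarrow> c = 0 \<and> d = 0)"

definition Q_indep :: "real \<Rightarrow> real \<Rightarrow> bool" where
  "Q_indep a b \<longleftrightarrow> (\<forall>r s. r \<in> \<rat> \<and> s \<in> \<rat> \<and> r * a + s * b = 0 \<longrightarrow> r = 0 \<and> s = 0)"

definition stable_loc :: "(R4 \<Rightarrow> real) \<Rightarrow> R4 set \<Rightarrow> R4 set" where
  "stable_loc H N = {P \<in> N. \<exists>\<gamma>::real \<Rightarrow> R4. \<gamma> 0 = P \<and>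
      (\<forall>t\<ge>0. (\<gamma> has_vector_derivative xiH H (\<gamma> t)) (at t within {0..}) \<and> \<gamma> t \<in> N) \<and>
      (\<gamma> \<longlongrightarrow> 0) at_top}"

definition unstable_loc :: "(R4 \<Rightarrow> real) \<Rightarrow> R4 set \<Rightarrow> R4 set" where
  "unstable_loc H N = {P \<in> N. \<exists>\<gamma>::real \<Rightarrow> R4. \<gamma> 0 = P \<and>
      (\<forall>t\<le>0. (\<gamma> has_vector_derivative xiH H (\<gamma> t)) (at t within {..0}) \<and> \<gamma> t \<in> N) \<and>
      (\<gamma> \<longlongrightarrow> 0) at_bot}"

definition jet :: "(R2 \<Rightarrow> real) \<Rightarrow> R2 \<Rightarrow> R4" where
  "jet z w = (fst w, snd w, pd z ex2 w, pd z ey2 w)"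

definition solves_HJ :: "(R4 \<Rightarrow> real) \<Rightarrow> R2 set \<Rightarrow> (R2 \<Rightarrow> real) \<Rightarrow> bool" where
  "solves_HJ H U z \<longleftrightarrow> (\<forall>w\<in>U. H (jet z w) = 0)"

end

theory Submission
  imports Defs
begin

text \<open>
  Let \<open>K\<close> be the linearization at the origin of the field \<open>w' = (H\<^sub>p, H\<^sub>q)(jet z w)\<close> on the
  \<open>(x, y)\<close>-plane, whose solutions are the projections of the characteristic trajectories lying on
  the jet of \<open>z\<close>. Differentiating the equation twice shows that the tangent plane of the jet at
  the origin is invariant under \<open>L\<close>, so \<open>K\<close> has two distinct real eigenvalues among
  \<open>\<plusminus>a, \<plusminus>b\<close>. If the jet is the stable manifold both are negative: for a positive one, the points
  whose projected trajectories stay near the origin would form a Lipschitz graph, hence a null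
  set, whereas every point of the stable manifold eventually stays near the origin.

  For a second solution \<open>zt\<close> with the same 2-jet, the mean value theorem applied to
  \<open>H(jet zt) - H(jet z) = 0\<close> gives a direction \<open>K w + o(|w|)\<close> along which \<open>zt - z\<close> is stationary,
  while \<open>zt - z = o(|w|\<^sup>2)\<close>. With the quadratic Lyapunov function \<open>V\<close> of the attracting \<open>K\<close>, a
  positive maximum of \<open>(zt - z) / V\<close> on a small sublevel set is impossible, so \<open>zt \<le> z\<close>, and
  symmetrically \<open>z \<le> zt\<close>. The unstable case is the stable case for \<open>-H\<close>.
\<close>

section \<open>Differential calculus\<close>

lemma has_real_derivative_comp_path:
  fixes g :: "'a::real_normed_vector \<Rightarrow> real"
  assumes "(\<gamma> has_vector_derivative \<gamma>') (at t)" and "(g has_derivative g') (at (\<gamma> t))"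
  shows "((\<lambda>s. g (\<gamma> s)) has_real_derivative g' \<gamma>') (at t)"
proof -
  have "((\<lambda>s. g (\<gamma> s)) has_derivative (\<lambda>s. g' (s *\<^sub>R \<gamma>'))) (at t)"
    using has_derivative_compose[OF assms(1)[unfolded has_vector_derivative_def] assms(2)] .
  moreover have "(\<lambda>s. g' (s *\<^sub>R \<gamma>')) = (\<lambda>s. s * g' \<gamma>')"
    using linear_scale[OF has_derivative_linear[OF assms(2)]] by auto
  ultimately show ?thesis unfolding has_field_derivative_def by (simp add: mult.commute[of _ "g' \<gamma>'"])
qed

lemma has_real_derivative_along_line:
  fixes g :: "'a::real_normed_vector \<Rightarrow> real"
  assumes "(g has_derivative g') (at (x + t *\<^sub>R u))"
  shows "((\<lambda>s. g (x + s *\<^sub>R u)) has_real_derivative g' u) (at t)"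
  by (rule has_real_derivative_comp_path[where \<gamma>="\<lambda>s. x + s *\<^sub>R u", OF _ assms])
    (auto intro!: derivative_eq_intros)

lemma second_difference_mvt:
  fixes f :: "'a::real_normed_vector \<Rightarrow> real"
  assumes h: "h > 0"
    and df: "\<And>s. 0 \<le> s \<Longrightarrow> s \<le> h \<Longrightarrow>
      f differentiable (at (x + s *\<^sub>R u)) \<and> f differentiable (at (x + s *\<^sub>R u + h *\<^sub>R v))"
  obtains \<theta> where "0 < \<theta>" "\<theta> < h"
    "f (x + h *\<^sub>R u + h *\<^sub>R v) - f (x + h *\<^sub>R v) - f (x + h *\<^sub>R u) + f x
      = h * (pd f u (x + \<theta> *\<^sub>R u + h *\<^sub>R v) - pd f u (x + \<theta> *\<^sub>R u))"
proof -
  define \<phi> where "\<phi> s = f (x + h *\<^sub>R v + s *\<^sub>R u) - f (x + s *\<^sub>R u)" for s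
  have "\<exists>\<theta>. 0 < \<theta> \<and> \<theta> < h \<and> \<phi> h - \<phi> 0 = (h - 0) *
      (pd f u (x + h *\<^sub>R v + \<theta> *\<^sub>R u) - pd f u (x + \<theta> *\<^sub>R u))"
  proof (rule MVT2[OF h])
    fix s assume "0 \<le> s" "s \<le> h"
    then have "f differentiable (at (x + h *\<^sub>R v + s *\<^sub>R u))" "f differentiable (at (x + s *\<^sub>R u))"
      using df[of s] by (simp_all add: ac_simps)
    then show "(\<phi> has_real_derivative pd f u (x + h *\<^sub>R v + s *\<^sub>R u) - pd f u (x + s *\<^sub>R u)) (at s)"
      unfolding \<phi>_def[abs_def] pd_def
      by (intro DERIV_diff has_real_derivative_along_line frechet_derivative_works[THEN iffD1])
  qed
  then show ?thesis using that unfolding \<phi>_def by (auto simp: algebra_simps)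
qed

lemma second_difference_asymptotics:
  fixes f :: "'a::real_normed_vector \<Rightarrow> real"
  assumes S: "open S" "x \<in> S" and df: "\<And>y. y \<in> S \<Longrightarrow> f differentiable (at y)"
    and D: "(pd f u has_derivative D) (at x)" and e: "e > 0"
  shows "\<forall>\<^sub>F h in at_right 0.
    \<bar>f (x + h *\<^sub>R u + h *\<^sub>R v) - f (x + h *\<^sub>R v) - f (x + h *\<^sub>R u) + f x - h\<^sup>2 * D v\<bar> \<le> e * h\<^sup>2"
proof -
  define M where "M = 2 * norm u + norm v + 1"
  have M: "M > 0" by (simp add: M_def add_nonneg_pos)
  obtain d where d: "d > 0"
    "\<And>y. norm (y - x) < d \<Longrightarrow> \<bar>pd f u y - pd f u x - D (y - x)\<bar> \<le> (e / M) * norm (y - x)"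
    using D[unfolded has_derivative_at_alt] e M by (metis divide_pos_pos real_norm_def)
  obtain d0 where d0: "d0 > 0" "ball x d0 \<subseteq> S" using S open_contains_ball by blast
  have "\<bar>f (x + h *\<^sub>R u + h *\<^sub>R v) - f (x + h *\<^sub>R v) - f (x + h *\<^sub>R u) + f x - h\<^sup>2 * D v\<bar> \<le> e * h\<^sup>2"
    if h: "0 < h" "h < min d d0 / M" for h
  proof -
    have near: "norm (s *\<^sub>R u + c *\<^sub>R v) < min d d0" and bound: "norm (s *\<^sub>R u + c *\<^sub>R v) \<le> h * norm u + c * norm v"
      if "0 \<le> s" "s \<le> h" "c \<in> {0, h}" for s c
    proof -
      show "norm (s *\<^sub>R u + c *\<^sub>R v) \<le> h * norm u + c * norm v"
        using that h by (intro norm_triangle_le add_mono) (auto intro: mult_right_mono)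
      also have "\<dots> \<le> h * M" using that h by (auto simp: M_def algebra_simps)
      also have "\<dots> < min d d0" using h M by (simp add: pos_less_divide_eq mult.commute)
      finally show "norm (s *\<^sub>R u + c *\<^sub>R v) < min d d0" .
    qed
    have inS: "x + (s *\<^sub>R u + c *\<^sub>R v) \<in> S" if "0 \<le> s" "s \<le> h" "c \<in> {0, h}" for s c
    proof -
      have "dist x (x + w) = norm w" for w :: 'a by (simp add: dist_norm)
      then show ?thesis using near[OF that] d0(2) by (auto simp: subset_iff)
    qed
    have "f differentiable (at (x + s *\<^sub>R u)) \<and> f differentiable (at (x + s *\<^sub>R u + h *\<^sub>R v))"
      if "0 \<le> s" "s \<le> h" for s
      using df[OF inS[OF that, of 0]] df[OF inS[OF that, of h]] by (simp add: add.assoc)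
    then obtain \<theta> where \<theta>: "0 < \<theta>" "\<theta> < h" and mvt:
      "f (x + h *\<^sub>R u + h *\<^sub>R v) - f (x + h *\<^sub>R v) - f (x + h *\<^sub>R u) + f x
        = h * (pd f u (x + \<theta> *\<^sub>R u + h *\<^sub>R v) - pd f u (x + \<theta> *\<^sub>R u))"
      using second_difference_mvt[OF h(1)] by blast
    define r where "r y = pd f u y - pd f u x - D (y - x)" for y
    have r: "\<bar>r (x + (\<theta> *\<^sub>R u + c *\<^sub>R v))\<bar> \<le> (e / M) * (h * norm u + c * norm v)" if "c \<in> {0, h}" for c
    proof -
      have "norm ((x + (\<theta> *\<^sub>R u + c *\<^sub>R v)) - x) < d" using near[of \<theta> c] that \<theta> by simp
      from d(2)[OF this] have "\<bar>r (x + (\<theta> *\<^sub>R u + c *\<^sub>R v))\<bar> \<le> (e / M) * norm (\<theta> *\<^sub>R u + c *\<^sub>R v)"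
        by (simp add: r_def)
      also have "\<dots> \<le> (e / M) * (h * norm u + c * norm v)"
        using bound[of \<theta> c] that \<theta> e M by (intro mult_left_mono) auto
      finally show ?thesis .
    qed
    have "D (\<theta> *\<^sub>R u + h *\<^sub>R v) - D (\<theta> *\<^sub>R u) = h * D v"
      using has_derivative_linear[OF D] by (simp add: linear_add linear_scale)
    then have "pd f u (x + \<theta> *\<^sub>R u + h *\<^sub>R v) - pd f u (x + \<theta> *\<^sub>R u) - h * D v
        = r (x + (\<theta> *\<^sub>R u + h *\<^sub>R v)) - r (x + (\<theta> *\<^sub>R u + 0 *\<^sub>R v))"
      by (simp add: r_def algebra_simps)
    also have "\<bar>\<dots>\<bar> \<le> (e / M) * (h * norm u + h * norm v) + (e / M) * (h * norm u + 0 * norm v)"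
      using r[of h] r[of 0] by (intro order_trans[OF abs_triangle_ineq4] add_mono) auto
    also have "\<dots> = (e / M) * (h * (2 * norm u + norm v))" by (simp add: algebra_simps)
    also have "\<dots> \<le> (e / M) * (h * M)" using e M h(1) by (intro mult_left_mono) (auto simp: M_def)
    also have "\<dots> = e * h" using M by simp
    finally have "\<bar>h * (pd f u (x + \<theta> *\<^sub>R u + h *\<^sub>R v) - pd f u (x + \<theta> *\<^sub>R u)) - h * (h * D v)\<bar> \<le> h * (e * h)"
      using h by (simp add: abs_mult right_diff_distrib[symmetric])
    then show ?thesis unfolding mvt by (simp add: power2_eq_square algebra_simps)
  qed
  moreover have "min d d0 / M > 0" using d d0 M by simp
  ultimately show ?thesis unfolding eventually_at_right_field by blast
qed

text \<open>Young's theorem: differentiability of the two first partials at \<open>x\<close> suffices.\<close>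
lemma pd2_commute:
  fixes f :: "'a::real_normed_vector \<Rightarrow> real"
  assumes S: "open S" "x \<in> S" and df: "\<And>y. y \<in> S \<Longrightarrow> f differentiable (at y)"
    and du: "pd f u differentiable (at x)" and dv: "pd f v differentiable (at x)"
  shows "pd2 f v u x = pd2 f u v x"
proof -
  define c1 where "c1 = pd2 f v u x"
  define c2 where "c2 = pd2 f u v x"
  have Du: "(pd f u has_derivative (\<lambda>w. pd2 f w u x)) (at x)"
    using du unfolding pd2_def pd_def[abs_def] by (simp add: frechet_derivative_works)
  have Dv: "(pd f v has_derivative (\<lambda>w. pd2 f w v x)) (at x)"
    using dv unfolding pd2_def pd_def[abs_def] by (simp add: frechet_derivative_works)
  have "\<bar>c1 - c2\<bar> \<le> 2 * e" if e: "e > 0" for e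
  proof -
    define \<Delta> where "\<Delta> h = f (x + h *\<^sub>R u + h *\<^sub>R v) - f (x + h *\<^sub>R v) - f (x + h *\<^sub>R u) + f x" for h
    have "\<forall>\<^sub>F h in at_right 0. \<bar>\<Delta> h - h\<^sup>2 * c1\<bar> \<le> e * h\<^sup>2"
      using second_difference_asymptotics[OF S df Du e, of v] by (simp add: \<Delta>_def c1_def)
    moreover have "\<forall>\<^sub>F h in at_right 0. \<bar>\<Delta> h - h\<^sup>2 * c2\<bar> \<le> e * h\<^sup>2"
      using second_difference_asymptotics[OF S df Dv e, of u] by (simp add: \<Delta>_def c2_def algebra_simps)
    moreover have "\<forall>\<^sub>F h in at_right 0. h > (0::real)" by (simp add: eventually_at_right_less)
    ultimately have "\<forall>\<^sub>F h in at_right 0. \<bar>\<Delta> h - h\<^sup>2 * c1\<bar> \<le> e * h\<^sup>2 \<and> \<bar>\<Delta> h - h\<^sup>2 * c2\<bar> \<le> e * h\<^sup>2 \<and> h > 0"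
      by eventually_elim blast
    then obtain h where h: "\<bar>\<Delta> h - h\<^sup>2 * c1\<bar> \<le> e * h\<^sup>2" "\<bar>\<Delta> h - h\<^sup>2 * c2\<bar> \<le> e * h\<^sup>2" "h > 0"
      using eventually_happens' trivial_limit_at_right_real by blast
    then have "\<bar>h\<^sup>2 * c1 - h\<^sup>2 * c2\<bar> \<le> 2 * (e * h\<^sup>2)" unfolding abs_le_iff by linarith
    moreover have "\<bar>h\<^sup>2 * c1 - h\<^sup>2 * c2\<bar> = h\<^sup>2 * \<bar>c1 - c2\<bar>"
      unfolding right_diff_distrib[symmetric] abs_mult by simp
    ultimately have "h\<^sup>2 * \<bar>c1 - c2\<bar> \<le> h\<^sup>2 * (2 * e)" by (simp add: algebra_simps)
    then show ?thesis using h(3) by simp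
  qed
  from this[of "\<bar>c1 - c2\<bar> / 4"] have "c1 = c2" by (cases "c1 = c2") auto
  then show ?thesis unfolding c1_def c2_def .
qed

lemma eventually_onorm_frechet_derivative_close:
  fixes f :: "'a::euclidean_space \<Rightarrow> 'b::real_normed_vector"
  assumes S: "open S" "x0 \<in> S" and df: "\<And>x. x \<in> S \<Longrightarrow> f differentiable (at x)"
    and cont: "\<And>i. i \<in> Basis \<Longrightarrow> isCont (\<lambda>x. frechet_derivative f (at x) i) x0"
    and e: "e > 0"
  shows "\<forall>\<^sub>F x in nhds x0. x \<in> S \<and> onorm (\<lambda>v. frechet_derivative f (at x) v - frechet_derivative f (at x0) v) \<le> e"
proof -
  define e' where "e' = e / real DIM('a)"
  have e': "e' > 0" using e by (simp add: e'_def)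
  have "\<forall>\<^sub>F x in nhds x0. \<forall>i\<in>Basis. dist (frechet_derivative f (at x) i) (frechet_derivative f (at x0) i) < e'"
  proof (intro eventually_ball_finite ballI)
    fix i :: 'a assume i: "i \<in> Basis"
    have "((\<lambda>x. frechet_derivative f (at x) i) \<longlongrightarrow> frechet_derivative f (at x0) i) (nhds x0)"
      using cont[OF i] tendsto_at_iff_tendsto_nhds isCont_def by blast
    then show "\<forall>\<^sub>F x in nhds x0. dist (frechet_derivative f (at x) i) (frechet_derivative f (at x0) i) < e'"
      using e' tendsto_iff[THEN iffD1, rule_format] by blast
  qed simp
  moreover have "\<forall>\<^sub>F x in nhds x0. x \<in> S" using S eventually_nhds_in_open by blast
  ultimately show ?thesis
  proof eventually_elim
    case (elim x)
    have bl: "bounded_linear (frechet_derivative f (at y))" if "y \<in> S" for y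
      using df that frechet_derivative_works has_derivative_bounded_linear by blast
    have "onorm (\<lambda>v. frechet_derivative f (at x) v - frechet_derivative f (at x0) v)
        \<le> (\<Sum>i\<in>Basis. norm (frechet_derivative f (at x) i - frechet_derivative f (at x0) i))"
      by (rule onorm_componentwise[OF bounded_linear_sub[OF bl bl]]) (use elim S in auto)
    also have "\<dots> \<le> (\<Sum>i\<in>(Basis::'a set). e')"
      using elim by (intro sum_mono) (auto simp: dist_norm less_imp_le)
    also have "\<dots> = e" by (simp add: e'_def)
    finally show ?case using elim by blast
  qed
qed

lemma strict_derivative_estimate:
  fixes f :: "'a::euclidean_space \<Rightarrow> 'b::real_normed_vector"
  assumes S: "open S" "x0 \<in> S" and df: "\<And>x. x \<in> S \<Longrightarrow> f differentiable (at x)"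
    and cont: "\<And>i. i \<in> Basis \<Longrightarrow> isCont (\<lambda>x. frechet_derivative f (at x) i) x0"
    and e: "e > 0"
  shows "\<exists>d>0. ball x0 d \<subseteq> S \<and> (\<forall>x\<in>ball x0 d. \<forall>y\<in>ball x0 d.
           norm (f x - f y - frechet_derivative f (at x0) (x - y)) \<le> e * norm (x - y))"
proof -
  obtain d where d: "d > 0" and near: "\<And>x. x \<in> ball x0 d \<Longrightarrow>
      x \<in> S \<and> onorm (\<lambda>v. frechet_derivative f (at x) v - frechet_derivative f (at x0) v) \<le> e"
    using eventually_onorm_frechet_derivative_close[OF assms] unfolding eventually_nhds_metric
    by (metis dist_commute mem_ball)
  have "norm (f x - f y - frechet_derivative f (at x0) (x - y)) \<le> e * norm (x - y)"
    if "x \<in> ball x0 d" "y \<in> ball x0 d" for x y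
  proof -
    have "norm (f x - f y - frechet_derivative f (at x0) (x - y)) \<le> norm (x - y) * e"
    proof (rule differentiable_bound_linearization[where S="ball x0 d" and f'="\<lambda>x. frechet_derivative f (at x)"])
      show "y + t *\<^sub>R (x - y) \<in> ball x0 d" if "t \<in> {0..1}" for t
        using convexD[OF convex_ball \<open>y \<in> ball x0 d\<close> \<open>x \<in> ball x0 d\<close>, of "1 - t" t] that
        by (simp add: algebra_simps)
      show "(f has_derivative frechet_derivative f (at x)) (at x within ball x0 d)" if "x \<in> ball x0 d" for x
        using df near[OF that] frechet_derivative_works has_derivative_at_withinI by blast
    qed (use near d in \<open>auto simp: fun_diff_def\<close>)
    then show ?thesis by (simp add: mult.commute)
  qed
  then show ?thesis using d near by blast
qed

lemma continuous_partials_imp_lipschitz_cball: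
  fixes f :: "'a::euclidean_space \<Rightarrow> 'b::real_normed_vector"
  assumes S: "open S" "cball c R \<subseteq> S" and df: "\<And>x. x \<in> S \<Longrightarrow> f differentiable (at x)"
    and cont: "\<And>i. i \<in> Basis \<Longrightarrow> continuous_on S (\<lambda>x. frechet_derivative f (at x) i)"
  shows "\<exists>B\<ge>0. \<forall>x\<in>cball c R. \<forall>y\<in>cball c R. norm (f x - f y) \<le> B * norm (x - y)"
proof -
  have "\<exists>b. \<forall>x\<in>cball c R. norm (frechet_derivative f (at x) i) \<le> b" if i: "i \<in> Basis" for i
  proof -
    have "compact ((\<lambda>x. frechet_derivative f (at x) i) ` cball c R)"
      using cont[OF i] S by (intro compact_continuous_image) (auto intro: continuous_on_subset)
    then show ?thesis by (auto dest!: compact_imp_bounded simp: bounded_iff)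
  qed
  then obtain b where b: "\<And>i x. i \<in> Basis \<Longrightarrow> x \<in> cball c R \<Longrightarrow> norm (frechet_derivative f (at x) i) \<le> b i"
    by metis
  define B where "B = (\<Sum>i\<in>Basis. \<bar>b i\<bar>)"
  have "norm (f x - f y) \<le> B * norm (x - y)" if "x \<in> cball c R" "y \<in> cball c R" for x y
  proof (rule differentiable_bound[where S="cball c R" and f'="\<lambda>x. frechet_derivative f (at x)"])
    show "(f has_derivative frechet_derivative f (at x)) (at x within cball c R)" if "x \<in> cball c R" for x
      using df S that frechet_derivative_works has_derivative_at_withinI by blast
    show "onorm (frechet_derivative f (at x)) \<le> B" if x: "x \<in> cball c R" for x
    proof -
      have "bounded_linear (frechet_derivative f (at x))"
        using df S x frechet_derivative_works has_derivative_bounded_linear by blast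
      then have "onorm (frechet_derivative f (at x)) \<le> (\<Sum>i\<in>Basis. norm (frechet_derivative f (at x) i))"
        by (rule onorm_componentwise)
      also have "\<dots> \<le> B" unfolding B_def using b x by (intro sum_mono) (auto intro: order_trans[OF _ abs_ge_self])
      finally show ?thesis .
    qed
  qed (use that in auto)
  moreover have "B \<ge> 0" by (simp add: B_def sum_nonneg)
  ultimately show ?thesis by blast
qed

lemma has_derivative_mult_vanishing:
  fixes g :: "'a::real_normed_vector \<Rightarrow> real"
  assumes g: "(g has_derivative g') (at x)" and g0: "g x = 0" and c: "isCont c x"
  shows "((\<lambda>w. c w * g w) has_derivative (\<lambda>v. c x * g' v)) (at x)"
proof -
  obtain B where B: "B > 0" "\<And>v. norm (g' v) \<le> norm v * B"
    using bounded_linear.pos_bounded[OF has_derivative_bounded_linear[OF g]] by blast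
  have "((\<lambda>w. (c w - c x) * g w) has_derivative (\<lambda>v. 0)) (at x)"
    unfolding has_derivative_at_alt
  proof (intro conjI allI impI bounded_linear_zero)
    fix e :: real assume e: "e > 0"
    obtain d1 where d1: "d1 > 0" "\<And>y. norm (y - x) < d1 \<Longrightarrow> norm (g y - g x - g' (y - x)) \<le> 1 * norm (y - x)"
      using g[unfolded has_derivative_at_alt] by (meson zero_less_one)
    obtain d2 where d2: "d2 > 0" "\<And>y. dist y x < d2 \<Longrightarrow> dist (c y) (c x) < e / (B + 1)"
      using c[unfolded continuous_at_eps_delta] e B by (metis add_pos_pos divide_pos_pos zero_less_one)
    have "\<bar>(c y - c x) * g y\<bar> \<le> e * norm (y - x)" if y: "norm (y - x) < min d1 d2" for y
    proof -
      have "\<bar>g y\<bar> \<le> norm (g y - g x - g' (y - x)) + norm (g' (y - x))" using g0 by simp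
      also have "\<dots> \<le> (B + 1) * norm (y - x)"
        using d1(2)[of y] y B(2)[of "y - x"] by (simp add: algebra_simps)
      finally have gy: "\<bar>g y\<bar> \<le> (B + 1) * norm (y - x)" .
      have cy: "\<bar>c y - c x\<bar> \<le> e / (B + 1)" using d2(2)[of y] y by (simp add: dist_norm)
      have "\<bar>(c y - c x) * g y\<bar> \<le> (e / (B + 1)) * ((B + 1) * norm (y - x))"
        unfolding abs_mult using cy gy by (intro mult_mono) auto
      also have "\<dots> = e * norm (y - x)" using B by simp
      finally show ?thesis .
    qed
    then show "\<exists>d>0. \<forall>y. norm (y - x) < d \<longrightarrow>
        norm ((c y - c x) * g y - (c x - c x) * g x - 0) \<le> e * norm (y - x)"
      using d1 d2 by (intro exI[of _ "min d1 d2"]) auto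
  qed
  from has_derivative_add[OF this has_derivative_mult_right[OF g, of "c x"]] show ?thesis
    by (simp add: algebra_simps)
qed

lemma has_derivative_near_linear_input:
  fixes g :: "'b::real_normed_vector \<Rightarrow> 'c::real_normed_vector" and T :: "'a::real_normed_vector \<Rightarrow> 'b"
  assumes g: "(g has_derivative g') (at 0)" "g 0 = 0" and T: "bounded_linear T" and e: "e > 0"
  obtains \<delta> d where "\<delta> > 0" "d > 0"
    "\<And>w y. norm w < d \<Longrightarrow> norm (y - T w) \<le> \<delta> * norm w \<Longrightarrow> norm (g y - g' (T w)) \<le> e * norm w"
proof -
  obtain BT where BT: "BT > 0" "\<And>x. norm (T x) \<le> norm x * BT" using bounded_linear.pos_bounded[OF T] by blast
  obtain Bg where Bg: "Bg > 0" "\<And>x. norm (g' x) \<le> norm x * Bg"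
    using bounded_linear.pos_bounded[OF has_derivative_bounded_linear[OF g(1)]] by blast
  define \<delta> where "\<delta> = min 1 (e / (2 * Bg))"
  define e' where "e' = e / (2 * (BT + 1))"
  have \<delta>: "\<delta> > 0" "\<delta> \<le> 1" "\<delta> * Bg \<le> e / 2" using e Bg by (auto simp: \<delta>_def min_def field_simps)
  have e': "e' > 0" "e' * (BT + 1) = e / 2" using e BT by (auto simp: e'_def field_simps)
  obtain d' where d': "d' > 0" "\<And>y. norm y < d' \<Longrightarrow> norm (g y - g' y) \<le> e' * norm y"
    using g e'(1) unfolding has_derivative_at_alt by (metis diff_zero)
  have "norm (g y - g' (T w)) \<le> e * norm w"
    if w: "norm w < d' / (BT + 1)" and y: "norm (y - T w) \<le> \<delta> * norm w" for w y
  proof -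
    have ny: "norm y \<le> (BT + 1) * norm w"
    proof -
      have "norm y \<le> norm (T w) + norm (y - T w)" by (metis add.commute diff_add_cancel norm_triangle_ineq)
      also have "\<dots> \<le> norm w * BT + 1 * norm w"
        using BT(2)[of w] y mult_left_le_one_le[OF norm_ge_zero \<delta>(1)[THEN less_imp_le] \<delta>(2), of w]
        by linarith
      finally show ?thesis by (simp add: algebra_simps)
    qed
    then have "norm y < d'" using w BT by (simp add: pos_less_divide_eq mult.commute)
    then have "norm (g y - g' y) \<le> e' * ((BT + 1) * norm w)"
      using d'(2) ny e'(1) order_trans mult_left_mono by (metis less_imp_le)
    moreover have "norm (g' y - g' (T w)) \<le> \<delta> * norm w * Bg"
    proof -
      have "norm (g' y - g' (T w)) = norm (g' (y - T w))"
        using linear_diff[OF has_derivative_linear[OF g(1)]] by metis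
      also have "\<dots> \<le> norm (y - T w) * Bg" by (rule Bg(2))
      also have "\<dots> \<le> \<delta> * norm w * Bg" using y Bg(1) by (simp add: mult_right_mono)
      finally show ?thesis .
    qed
    ultimately have "norm (g y - g' (T w)) \<le> e' * (BT + 1) * norm w + \<delta> * Bg * norm w"
      using norm_triangle_ineq[of "g y - g' y" "g' y - g' (T w)"] by (simp add: algebra_simps)
    also have "\<dots> \<le> e / 2 * norm w + e / 2 * norm w"
      using e' \<delta>(3) by (intro add_mono mult_right_mono) auto
    finally show ?thesis by simp
  qed
  then show ?thesis using that \<delta>(1) d'(1) BT(1) by (metis divide_pos_pos add_pos_pos zero_less_one)
qed

lemma quotient_increases_along:
  fixes u V :: "'a::real_normed_vector \<Rightarrow> real"
  assumes u: "(u has_derivative u') (at w)" and V: "(V has_derivative V') (at w)"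
    and a: "u' a = 0" "V' a < 0" and pos: "u w > 0" "V w > 0"
  shows "\<exists>t>0. V (w + t *\<^sub>R a) < V w \<and> u w / V w < u (w + t *\<^sub>R a) / V (w + t *\<^sub>R a)"
proof -
  have du: "((\<lambda>t. u (w + t *\<^sub>R a)) has_real_derivative u' a) (at 0)"
    using has_real_derivative_along_line[of u u' w 0 a] u by simp
  have dV: "((\<lambda>t. V (w + t *\<^sub>R a)) has_real_derivative V' a) (at 0)"
    using has_real_derivative_along_line[of V V' w 0 a] V by simp
  have "((\<lambda>t. u (w + t *\<^sub>R a) / V (w + t *\<^sub>R a)) has_real_derivative
      (u' a * V w - u w * V' a) / (V w * V w)) (at 0)"
    using DERIV_divide[OF du dV] pos by simp
  moreover have "(u' a * V w - u w * V' a) / (V w * V w) > 0"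
    using a pos by (simp add: mult_pos_neg divide_neg_pos)
  ultimately obtain e1 where e1: "e1 > 0"
    "\<And>t. t > 0 \<Longrightarrow> t < e1 \<Longrightarrow> u w / V w < u (w + t *\<^sub>R a) / V (w + t *\<^sub>R a)"
    using DERIV_pos_inc_right by fastforce
  obtain e2 where e2: "e2 > 0" "\<And>t. t > 0 \<Longrightarrow> t < e2 \<Longrightarrow> V (w + t *\<^sub>R a) < V w"
    using DERIV_neg_dec_right[OF dV a(2)] by fastforce
  show ?thesis
    using e1 e2 by (intro exI[of _ "min e1 e2 / 2"]) auto
qed

text \<open>At a positive maximum of \<open>u / V\<close>, moving in a direction in which \<open>u\<close> is stationary and \<open>V\<close>
  decreases would increase the quotient.\<close>
lemma sublevel_maximum_principle:
  fixes u V :: "'a::real_normed_vector \<Rightarrow> real"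
  assumes compact: "compact {w. V w \<le> r}" and ne: "{w. V w \<le> r} \<noteq> {}"
    and cont: "continuous_on {w. V w \<le> r} (\<lambda>w. u w / V w)"
    and Vpos: "\<And>w. V w \<le> r \<Longrightarrow> u w \<noteq> 0 \<Longrightarrow> V w > 0"
    and descent: "\<And>w. V w \<le> r \<Longrightarrow> u w > 0 \<Longrightarrow>
      \<exists>u' V' a. (u has_derivative u') (at w) \<and> (V has_derivative V') (at w) \<and> u' a = 0 \<and> V' a < 0"
    and w: "V w \<le> r"
  shows "u w \<le> 0"
proof -
  obtain w0 where w0: "V w0 \<le> r" "\<And>w. V w \<le> r \<Longrightarrow> u w / V w \<le> u w0 / V w0"
    using continuous_attains_sup[OF compact ne cont] by auto
  have max: "u w0 / V w0 \<le> 0"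
  proof (rule ccontr)
    assume max_pos: "\<not> u w0 / V w0 \<le> 0"
    then have V0: "V w0 > 0" using Vpos w0(1) by fastforce
    then have pos: "u w0 > 0" using max_pos by (simp add: not_le zero_less_divide_iff)
    obtain u' V' a where "(u has_derivative u') (at w0)" "(V has_derivative V') (at w0)" "u' a = 0" "V' a < 0"
      using descent[OF w0(1) pos] by blast
    from quotient_increases_along[OF this pos V0] obtain t where
      "V (w0 + t *\<^sub>R a) < V w0" "u w0 / V w0 < u (w0 + t *\<^sub>R a) / V (w0 + t *\<^sub>R a)"
      by blast
    then show False using w0 by (meson less_le_trans not_le order_less_imp_le)
  qed
  show ?thesis
  proof (rule ccontr)
    assume "\<not> u w \<le> 0"
    moreover have "V w > 0" using Vpos w calculation by auto
    moreover have "u w / V w \<le> 0" using w0(2)[OF w] max by linarith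
    ultimately show False by (simp add: divide_le_0_iff)
  qed
qed

text \<open>At the origin the quotient takes the junk value \<open>u 0 / V 0 = 0 / 0 = 0\<close>.\<close>
lemma isCont_quotient_at_zero:
  fixes u V :: "'a::real_normed_vector \<Rightarrow> real"
  assumes small: "\<And>e. e > 0 \<Longrightarrow> \<exists>d>0. \<forall>x. norm x < d \<longrightarrow> \<bar>u x\<bar> \<le> e * (norm x)\<^sup>2"
    and V: "\<And>x. (norm x)\<^sup>2 \<le> c * V x" "c > 0"
  shows "isCont (\<lambda>x. u x / V x) 0"
  unfolding continuous_at_eps_delta
proof (intro allI impI)
  fix e :: real assume e: "e > 0"
  obtain d where d: "d > 0" "\<And>x. norm x < d \<Longrightarrow> \<bar>u x\<bar> \<le> e / (2 * c) * (norm x)\<^sup>2"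
    using small[of "e / (2 * c)"] e V(2) by auto
  have "\<bar>u x / V x\<bar> < e" if "norm x < d" for x
  proof (cases "V x = 0")
    case False
    have "0 \<le> c * V x" using V(1)[of x] by (meson order_trans zero_le_power2)
    then have "V x > 0" using False V(2) by (simp add: zero_le_mult_iff)
    have "\<bar>u x\<bar> \<le> e / (2 * c) * (c * V x)"
      using d(2)[OF that] V(1)[of x] e V(2) by (meson order_trans mult_left_mono divide_nonneg_pos less_imp_le zero_less_mult_iff zero_less_numeral)
    also have "\<dots> < e * V x" using \<open>V x > 0\<close> e V(2) by simp
    finally show ?thesis using \<open>V x > 0\<close> by (simp add: abs_divide pos_divide_less_eq)
  qed (use e in simp)
  moreover have "u 0 / V 0 = 0" using d(2)[of 0] d(1) by simp
  ultimately show "\<exists>d>0. \<forall>x'. dist x' 0 < d \<longrightarrow> dist (u x' / V x') (u 0 / V 0) < e"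
    using d(1) by auto
qed

section \<open>Differential inequalities and null sets\<close>

lemma nondecreasing_while_positive:
  fixes f f' :: "real \<Rightarrow> real"
  assumes cont: "continuous_on {0..} f"
    and der: "\<And>t. t > 0 \<Longrightarrow> (f has_real_derivative f' t) (at t)"
    and pos: "\<And>t. t > 0 \<Longrightarrow> f t > 0 \<Longrightarrow> f' t \<ge> 0"
    and f0: "f 0 > 0" and T: "T \<ge> 0"
  shows "f T \<ge> f 0"
proof -
  have mono: "f 0 \<le> f b" if b: "0 \<le> b" "\<And>t. 0 < t \<Longrightarrow> t < b \<Longrightarrow> f t > 0" for b
  proof (rule DERIV_nonneg_imp_increasing_open[OF b(1)])
    show "continuous_on {0..b} f" using cont by (rule continuous_on_subset) auto
  qed (use der pos b(2) in blast)
  define Z where "Z = {t \<in> {0..T}. f t \<le> 0}"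
  show ?thesis
  proof (cases "Z = {}")
    case True
    show ?thesis
    proof (rule mono[OF T])
      fix t assume t: "0 < t" "t < T"
      then have "t \<notin> Z" using True by blast
      then show "f t > 0" using t by (auto simp: Z_def)
    qed
  next
    case False
    have "closed Z"
    proof -
      have "closed ({0..T} \<inter> f -` {..0})"
        using cont by (intro continuous_closed_preimage) (auto intro: continuous_on_subset)
      moreover have "{0..T} \<inter> f -` {..0} = Z" by (auto simp: Z_def)
      ultimately show ?thesis by simp
    qed
    moreover have bZ: "bdd_below Z" by (auto simp: Z_def bdd_below_def)
    ultimately have zZ: "Inf Z \<in> Z" using closed_contains_Inf False by blast
    have "f t > 0" if "0 < t" "t < Inf Z" for t
      using that cInf_lower[OF _ bZ, of t] zZ by (force simp: Z_def)
    then have "f 0 \<le> f (Inf Z)" using mono zZ by (auto simp: Z_def)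
    then show ?thesis using zZ f0 by (auto simp: Z_def)
  qed
qed

lemma linear_growth_from_derivative:
  fixes f f' :: "real \<Rightarrow> real"
  assumes cont: "continuous_on {0..} f"
    and der: "\<And>t. t > 0 \<Longrightarrow> (f has_real_derivative f' t) (at t)"
    and lb: "\<And>t. t > 0 \<Longrightarrow> f' t \<ge> c" and T: "T \<ge> 0"
  shows "f T \<ge> f 0 + c * T"
proof -
  have "(\<lambda>t. f t - c * t) 0 \<le> (\<lambda>t. f t - c * t) T"
  proof (rule DERIV_nonneg_imp_increasing_open[OF T])
    show "continuous_on {0..T} (\<lambda>t. f t - c * t)"
      using cont by (intro continuous_intros) (auto intro: continuous_on_subset)
    fix x :: real assume x: "0 < x" "x < T"
    have "((\<lambda>t. f t - c * t) has_real_derivative f' x - c) (at x)"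
      using der[of x] x by (auto intro!: derivative_eq_intros)
    then show "\<exists>y. ((\<lambda>t. f t - c * t) has_real_derivative y) (at x) \<and> 0 \<le> y" using lb[of x] x by auto
  qed
  then show ?thesis by simp
qed

lemma linear_growth_of_positive_supersolution:
  fixes f f' :: "real \<Rightarrow> real"
  assumes cont: "continuous_on {0..} f"
    and der: "\<And>t. t > 0 \<Longrightarrow> (f has_real_derivative f' t) (at t)"
    and super: "\<And>t. t > 0 \<Longrightarrow> f t \<ge> 0 \<Longrightarrow> f' t \<ge> c * f t"
    and c: "c \<ge> 0" and f0: "f 0 > 0" and T: "T \<ge> 0"
  shows "f T \<ge> f 0 + c * f 0 * T"
proof -
  have persist: "f t \<ge> f 0" if "t \<ge> 0" for t
  proof (rule nondecreasing_while_positive[OF cont der _ f0 that])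
    fix s :: real assume s: "s > 0" "f s > 0"
    then have "c * f s \<ge> 0" using c by simp
    then show "f' s \<ge> 0" using super[of s] s by linarith
  qed
  show ?thesis
  proof (rule linear_growth_from_derivative[OF cont der _ T])
    fix t :: real assume "t > 0"
    then show "f' t \<ge> c * f 0" using super[of t] persist[of t] f0 c
      by (meson less_imp_le mult_left_mono order_trans)
  qed
qed

lemma gronwall_backward_distance:
  fixes \<gamma> \<gamma>' :: "real \<Rightarrow> 'a::real_inner" and X :: "'a \<Rightarrow> 'a"
  assumes c: "continuous_on {0..} \<gamma>" "continuous_on {0..} \<gamma>'"
    and d: "\<And>t. t > 0 \<Longrightarrow> (\<gamma> has_vector_derivative X (\<gamma> t)) (at t)"
      "\<And>t. t > 0 \<Longrightarrow> (\<gamma>' has_vector_derivative X (\<gamma>' t)) (at t)"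
    and lip: "\<And>t. 0 \<le> t \<Longrightarrow> t \<le> T \<Longrightarrow> norm (X (\<gamma> t) - X (\<gamma>' t)) \<le> B * norm (\<gamma> t - \<gamma>' t)"
    and B: "B \<ge> 0" and T: "T \<ge> 0"
  shows "norm (\<gamma> 0 - \<gamma>' 0) \<le> exp (B * T) * norm (\<gamma> T - \<gamma>' T)"
proof -
  define \<phi> where "\<phi> t = exp (2 * B * t) * ((\<gamma> t - \<gamma>' t) \<bullet> (\<gamma> t - \<gamma>' t))" for t
  have "\<phi> 0 \<le> \<phi> T"
  proof (rule DERIV_nonneg_imp_increasing_open[OF T])
    show "continuous_on {0..T} \<phi>" unfolding \<phi>_def
      using c by (intro continuous_intros) (auto intro: continuous_on_subset)
    fix t :: real assume t: "0 < t" "t < T"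
    define D where "D = \<gamma> t - \<gamma>' t"
    define D' where "D' = X (\<gamma> t) - X (\<gamma>' t)"
    have dD: "((\<lambda>s. \<gamma> s - \<gamma>' s) has_vector_derivative D') (at t)"
      unfolding D'_def using d t by (intro has_vector_derivative_diff) auto
    have "((\<lambda>x. x \<bullet> x) has_derivative (\<lambda>h. D \<bullet> h + h \<bullet> D)) (at D)"
      by (auto intro!: derivative_eq_intros)
    from has_real_derivative_comp_path[OF dD this[unfolded D_def]]
    have "((\<lambda>s. (\<gamma> s - \<gamma>' s) \<bullet> (\<gamma> s - \<gamma>' s)) has_real_derivative 2 * (D \<bullet> D')) (at t)"
      by (simp add: D_def inner_commute)
    moreover have "((\<lambda>s. exp (2 * B * s)) has_real_derivative exp (2 * B * t) * (2 * B)) (at t)"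
      by (auto intro!: derivative_eq_intros)
    ultimately have "(\<phi> has_real_derivative exp (2 * B * t) * (2 * B) * (D \<bullet> D) + 2 * (D \<bullet> D') * exp (2 * B * t)) (at t)"
      unfolding \<phi>_def using DERIV_mult[of "\<lambda>s. exp (2 * B * s)"] by (simp add: D_def)
    then have "(\<phi> has_real_derivative exp (2 * B * t) * (2 * (B * (D \<bullet> D) + D \<bullet> D'))) (at t)"
      by (simp add: algebra_simps)
    moreover have "B * (D \<bullet> D) + D \<bullet> D' \<ge> 0"
    proof -
      have "\<bar>D \<bullet> D'\<bar> \<le> norm D * norm D'" by (rule Cauchy_Schwarz_ineq2)
      also have "\<dots> \<le> norm D * (B * norm D)"
        using lip[of t] t by (intro mult_left_mono) (auto simp: D_def D'_def)
      also have "\<dots> = B * (D \<bullet> D)" by (simp add: power2_norm_eq_inner[symmetric] power2_eq_square)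
      finally show ?thesis by linarith
    qed
    ultimately show "\<exists>y. DERIV \<phi> t :> y \<and> 0 \<le> y" by auto
  qed
  then have "(norm (\<gamma> 0 - \<gamma>' 0))\<^sup>2 \<le> (exp (B * T) * norm (\<gamma> T - \<gamma>' T))\<^sup>2"
    by (simp add: \<phi>_def power2_norm_eq_inner power_mult_distrib exp_double[symmetric] mult.assoc)
  then show ?thesis by (rule power2_le_imp_le) simp
qed

definition forward_solution :: "('a::real_normed_vector \<Rightarrow> 'a) \<Rightarrow> 'a set \<Rightarrow> (real \<Rightarrow> 'a) \<Rightarrow> bool" where
  "forward_solution X S q \<longleftrightarrow> continuous_on {0..} q \<and> (\<forall>t>0. (q has_vector_derivative X (q t)) (at t)) \<and>
     (\<forall>t\<ge>0. q t \<in> S)"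

lemma forward_solution_shift:
  assumes q: "continuous_on {0..} q" "\<And>t. t > 0 \<Longrightarrow> (q has_vector_derivative X (q t)) (at t)"
    and S: "\<And>t. t \<ge> s \<Longrightarrow> q t \<in> S" and s: "s \<ge> 0"
  shows "forward_solution X S (\<lambda>t. q (s + t))"
  unfolding forward_solution_def
proof (intro conjI allI impI)
  show "continuous_on {0..} (\<lambda>t. q (s + t))"
    by (rule continuous_on_compose2[OF q(1)]) (use s in \<open>auto intro!: continuous_intros\<close>)
  fix t :: real
  assume "t > 0"
  then have "(q has_vector_derivative X (q (s + t))) (at (s + t))" using q(2)[of "s + t"] s by simp
  moreover have "((\<lambda>t. s + t) has_vector_derivative 1) (at t)" by (auto intro!: derivative_eq_intros)
  ultimately show "((\<lambda>t. q (s + t)) has_vector_derivative X (q (s + t))) (at t)"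
    using vector_diff_chain_at by (fastforce simp: o_def)
qed (use S in auto)

lemma convergent_path_bounded:
  fixes \<gamma> :: "real \<Rightarrow> 'a::real_normed_vector"
  assumes c: "continuous_on {0..} \<gamma>" and lim: "(\<gamma> \<longlongrightarrow> 0) at_top" and e: "e > 0"
  obtains n R :: nat where "\<And>t. t \<ge> 0 \<Longrightarrow> norm (\<gamma> t) \<le> real R" "\<And>t. t \<ge> real n \<Longrightarrow> norm (\<gamma> t) < e"
proof -
  obtain T0 where T0: "\<And>t. t \<ge> T0 \<Longrightarrow> norm (\<gamma> t) < e"
    using lim e unfolding tendsto_iff eventually_at_top_linorder by force
  define n where "n = nat \<lceil>T0\<rceil>"
  have nT: "real n \<ge> T0" by (simp add: n_def) linarith
  have "compact (\<gamma> ` {0..real n})" using c by (intro compact_continuous_image) (auto intro: continuous_on_subset)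
  then obtain B where B: "\<And>t. t \<in> {0..real n} \<Longrightarrow> norm (\<gamma> t) \<le> B"
    using compact_imp_bounded bounded_iff by (metis imageI)
  define R where "R = nat \<lceil>max B e\<rceil>"
  have RB: "real R \<ge> B" "real R \<ge> e" by (simp_all add: R_def) linarith+
  have "norm (\<gamma> t) \<le> real R" if "t \<ge> 0" for t
  proof (cases "t \<le> real n")
    case True
    then show ?thesis using B[of t] RB that by simp
  next
    case False
    then show ?thesis using T0[of t] nT RB by simp
  qed
  moreover have "norm (\<gamma> t) < e" if "t \<ge> real n" for t using T0 nT that by simp
  ultimately show ?thesis using that[of R n] by blast
qed

lemma has_vector_derivative_reflect:
  assumes "(\<gamma> has_vector_derivative v) (at (- t) within uminus ` S)"
  shows "((\<lambda>s. \<gamma> (- s)) has_vector_derivative - v) (at t within S)"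
proof -
  have "(uminus has_vector_derivative - 1) (at t within S)" by (auto intro!: derivative_eq_intros)
  from vector_diff_chain_within[OF this] assms show ?thesis by (simp add: o_def)
qed

lemma negligible_inverse_lipschitz:
  fixes \<Phi> :: "'a::euclidean_space \<Rightarrow> 'a"
  assumes neg: "negligible (\<Phi> ` E)"
    and lip: "\<And>p p'. p \<in> E \<Longrightarrow> p' \<in> E \<Longrightarrow> norm (p - p') \<le> B * norm (\<Phi> p - \<Phi> p')"
  shows "negligible E"
proof -
  have inj: "inj_on \<Phi> E" using lip by (intro inj_onI) (metis diff_self mult_zero_right norm_le_zero_iff norm_zero right_minus_eq)
  have "negligible (inv_into E \<Phi> ` \<Phi> ` E)"
  proof (rule negligible_locally_Lipschitz_image[OF order_refl neg])
    fix y assume "y \<in> \<Phi> ` E"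
    then show "\<exists>T B. open T \<and> y \<in> T \<and>
        (\<forall>y'\<in>\<Phi> ` E \<inter> T. norm (inv_into E \<Phi> y' - inv_into E \<Phi> y) \<le> B * norm (y' - y))"
      using lip inj by (intro exI[of _ UNIV] exI[of _ B]) auto
  qed
  then show ?thesis using inj by (simp add: inv_into_image_cancel)
qed

lemma negligible_lipschitz_graph:
  fixes \<Gamma> :: "R2 set"
  assumes lip: "\<And>x y. x \<in> \<Gamma> \<Longrightarrow> y \<in> \<Gamma> \<Longrightarrow> norm (x - y) \<le> B * \<bar>v \<bullet> x - v \<bullet> y\<bar>"
  shows "negligible \<Gamma>"
proof (rule negligible_inverse_lipschitz[where \<Phi>="\<lambda>x. (v \<bullet> x, 0)" and B=B])
  have "negligible {p::R2. (0, 1) \<bullet> p = 0}" by (rule negligible_hyperplane) (simp add: zero_prod_def)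
  then show "negligible ((\<lambda>x. (v \<bullet> x, 0::real)) ` \<Gamma>)"
    by (rule negligible_subset) (auto simp: inner_prod_def)
qed (use lip in simp)

section \<open>Linear algebra\<close>

lemma linear_R2_expand:
  assumes "linear f"
  shows "f (a, b) = a *\<^sub>R f ex2 + b *\<^sub>R f ey2"
proof -
  have "(a, b) = a *\<^sub>R ex2 + b *\<^sub>R ey2" by (simp add: ex2_def ey2_def)
  then show ?thesis using linear_add[OF assms] linear_scale[OF assms] by metis
qed

lemma linear_R4_expand:
  assumes "linear f"
  shows "f (a, b, c, d) = a *\<^sub>R f ex4 + b *\<^sub>R f ey4 + c *\<^sub>R f ep4 + d *\<^sub>R f eq4"
proof -
  have "(a, b, c, d) = a *\<^sub>R ex4 + b *\<^sub>R ey4 + c *\<^sub>R ep4 + d *\<^sub>R eq4" by (simp add: ex4_def ey4_def ep4_def eq4_def)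
  then show ?thesis using linear_add[OF assms] linear_scale[OF assms] by metis
qed

lemma eigencombination_first_coeff_zero:
  fixes L :: "'a::real_vector \<Rightarrow> 'a"
  assumes L: "linear L" and e1: "e1 \<noteq> 0"
    and ev: "L e1 = l1 *\<^sub>R e1" "L e2 = l2 *\<^sub>R e2" "L e3 = l3 *\<^sub>R e3" "L e4 = l4 *\<^sub>R e4"
    and dist: "l1 \<noteq> l2" "l1 \<noteq> l3" "l1 \<noteq> l4"
    and s: "d1 *\<^sub>R e1 + d2 *\<^sub>R e2 + d3 *\<^sub>R e3 + d4 *\<^sub>R e4 = 0"
  shows "d1 = 0"
proof -
  define Q where "Q a v = L v - a *\<^sub>R v" for a v
  have Q: "linear (Q a)" for a unfolding Q_def by (intro linear_compose_sub L linear_scale_self)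
  have Qe: "Q a (c *\<^sub>R e) = (c * (l - a)) *\<^sub>R e" if "L e = l *\<^sub>R e" for a c l e
    using that linear_scale[OF L] by (simp add: Q_def algebra_simps)
  have "Q l2 (Q l3 (Q l4 (d1 *\<^sub>R e1 + d2 *\<^sub>R e2 + d3 *\<^sub>R e3 + d4 *\<^sub>R e4)))
      = (d1 * (l1 - l4) * (l1 - l3) * (l1 - l2)) *\<^sub>R e1"
    by (simp add: linear_add[OF Q] Qe[OF ev(1)] Qe[OF ev(2)] Qe[OF ev(3)] Qe[OF ev(4)])
  then have "(d1 * (l1 - l4) * (l1 - l3) * (l1 - l2)) *\<^sub>R e1 = 0"
    using s linear_0[OF Q] by simp
  then show ?thesis using e1 dist by simp
qed

lemma eigencombination_zero:
  fixes L :: "'a::real_vector \<Rightarrow> 'a"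
  assumes L: "linear L" and ne: "e1 \<noteq> 0" "e2 \<noteq> 0" "e3 \<noteq> 0" "e4 \<noteq> 0"
    and ev: "L e1 = l1 *\<^sub>R e1" "L e2 = l2 *\<^sub>R e2" "L e3 = l3 *\<^sub>R e3" "L e4 = l4 *\<^sub>R e4"
    and dist: "distinct [l1, l2, l3, l4]"
    and s: "d1 *\<^sub>R e1 + d2 *\<^sub>R e2 + d3 *\<^sub>R e3 + d4 *\<^sub>R e4 = 0"
  shows "d1 = 0 \<and> d2 = 0 \<and> d3 = 0 \<and> d4 = 0"
proof (intro conjI)
  note first = eigencombination_first_coeff_zero[OF L]
  show "d1 = 0" using first[OF ne(1) ev] dist s by simp
  show "d2 = 0" using first[OF ne(2) ev(2,1,3,4), of d2 d1 d3 d4] dist s by (simp add: ac_simps)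
  show "d3 = 0" using first[OF ne(3) ev(3,1,2,4), of d3 d1 d2 d4] dist s by (simp add: ac_simps)
  show "d4 = 0" using first[OF ne(4) ev(4,1,2,3), of d4 d1 d2 d3] dist s
    by (simp add: ac_simps)
qed

lemma eigenvectors_span_R4:
  fixes L :: "R4 \<Rightarrow> R4"
  assumes L: "linear L" and ne: "e1 \<noteq> 0" "e2 \<noteq> 0" "e3 \<noteq> 0" "e4 \<noteq> 0"
    and ev: "L e1 = l1 *\<^sub>R e1" "L e2 = l2 *\<^sub>R e2" "L e3 = l3 *\<^sub>R e3" "L e4 = l4 *\<^sub>R e4"
    and dist: "distinct [l1, l2, l3, l4]"
  obtains c1 c2 c3 c4 where "v = c1 *\<^sub>R e1 + c2 *\<^sub>R e2 + c3 *\<^sub>R e3 + c4 *\<^sub>R e4"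
proof -
  have neq: "distinct [e1, e2, e3, e4]"
    using ev dist ne by auto
  define S where "S = {e1, e2, e3, e4}"
  have sumS: "(\<Sum>x\<in>S. u x *\<^sub>R x) = u e1 *\<^sub>R e1 + u e2 *\<^sub>R e2 + u e3 *\<^sub>R e3 + u e4 *\<^sub>R e4" for u
    using neq by (simp add: S_def add.assoc)
  have "independent S"
  proof
    assume "dependent S"
    then obtain u where u: "\<exists>v\<in>S. u v \<noteq> 0" "(\<Sum>v\<in>S. u v *\<^sub>R v) = 0"
      using dependent_finite[of S] by (auto simp: S_def)
    have "u e1 = 0 \<and> u e2 = 0 \<and> u e3 = 0 \<and> u e4 = 0"
      using eigencombination_zero[OF L ne ev dist] u(2) unfolding sumS by blast
    then show False using u(1) by (auto simp: S_def)
  qed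
  moreover have "card S = 4" using neq by (simp add: S_def)
  ultimately have "UNIV \<subseteq> span S"
    by (intro card_ge_dim_independent) auto
  then obtain u where "v = (\<Sum>x\<in>S. u x *\<^sub>R x)" using span_finite[of S] by (auto simp: S_def)
  then show ?thesis using that unfolding sumS by blast
qed

text \<open>\<open>det (m I - K)\<close>, the matrix of \<open>K\<close> having columns \<open>K ex2\<close> and \<open>K ey2\<close>.\<close>
definition charpoly2 :: "(R2 \<Rightarrow> R2) \<Rightarrow> real \<Rightarrow> real" where
  "charpoly2 K m = (m - fst (K ex2)) * (m - snd (K ey2)) - fst (K ey2) * snd (K ex2)"

lemma charpoly2_cayley_hamilton:
  assumes K: "linear K"
  obtains \<tau> \<delta> where "\<And>m. charpoly2 K m = m\<^sup>2 - \<tau> * m + \<delta>" "\<And>w. K (K w) - \<tau> *\<^sub>R K w + \<delta> *\<^sub>R w = 0"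
proof
  define \<tau> where "\<tau> = fst (K ex2) + snd (K ey2)"
  define \<delta> where "\<delta> = fst (K ex2) * snd (K ey2) - fst (K ey2) * snd (K ex2)"
  show "charpoly2 K m = m\<^sup>2 - \<tau> * m + \<delta>" for m
    by (simp add: charpoly2_def \<tau>_def \<delta>_def power2_eq_square algebra_simps)
  show "K (K w) - \<tau> *\<^sub>R K w + \<delta> *\<^sub>R w = 0" for w
  proof -
    obtain a b where w: "w = (a, b)" by fastforce
    have "K (a, b) = (a * fst (K ex2) + b * fst (K ey2), a * snd (K ex2) + b * snd (K ey2))" for a b
      by (simp add: linear_R2_expand[OF K] prod_eq_iff)
    then show ?thesis by (simp add: w \<tau>_def \<delta>_def zero_prod_def algebra_simps)
  qed
qed

lemma invariant_plane_coefficients: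
  fixes L :: "R4 \<Rightarrow> R4" and T :: "R2 \<Rightarrow> R4" and K :: "R2 \<Rightarrow> R2"
  assumes L: "linear L" and T: "linear T" and K: "linear K" and inv: "\<And>v. L (T v) = T (K v)"
    and ne: "e1 \<noteq> 0" "e2 \<noteq> 0" "e3 \<noteq> 0" "e4 \<noteq> 0"
    and ev: "L e1 = l1 *\<^sub>R e1" "L e2 = l2 *\<^sub>R e2" "L e3 = l3 *\<^sub>R e3" "L e4 = l4 *\<^sub>R e4"
    and dist: "distinct [l1, l2, l3, l4]"
    and Tw: "T w = c1 *\<^sub>R e1 + c2 *\<^sub>R e2 + c3 *\<^sub>R e3 + c4 *\<^sub>R e4"
  shows "c1 * charpoly2 K l1 = 0 \<and> c2 * charpoly2 K l2 = 0 \<and> c3 * charpoly2 K l3 = 0 \<and> c4 * charpoly2 K l4 = 0"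
proof -
  obtain \<tau> \<delta> where p: "\<And>m. charpoly2 K m = m\<^sup>2 - \<tau> * m + \<delta>"
    and ch: "\<And>w. K (K w) - \<tau> *\<^sub>R K w + \<delta> *\<^sub>R w = 0"
    using charpoly2_cayley_hamilton[OF K] by blast
  have "L (L (T w)) - \<tau> *\<^sub>R L (T w) + \<delta> *\<^sub>R T w = T (K (K w) - \<tau> *\<^sub>R K w + \<delta> *\<^sub>R w)"
    by (simp add: inv linear_add[OF T] linear_diff[OF T] linear_scale[OF T])
  then have "L (L (T w)) - \<tau> *\<^sub>R L (T w) + \<delta> *\<^sub>R T w = 0" by (simp add: ch linear_0[OF T])
  then have "(c1 * charpoly2 K l1) *\<^sub>R e1 + (c2 * charpoly2 K l2) *\<^sub>R e2
      + (c3 * charpoly2 K l3) *\<^sub>R e3 + (c4 * charpoly2 K l4) *\<^sub>R e4 = 0"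
    unfolding Tw p by (simp add: ev linear_add[OF L] linear_scale[OF L] power2_eq_square algebra_simps)
  then show ?thesis by (rule eigencombination_zero[OF L ne ev dist])
qed

lemma eigencombinations_parallel_if_single_root:
  assumes dist: "distinct [l1, l2, l3, l4]"
    and single: "\<And>l l'. l \<in> {l1, l2, l3, l4} \<Longrightarrow> l' \<in> {l1, l2, l3, l4} \<Longrightarrow> p l = 0 \<Longrightarrow> p l' = 0 \<Longrightarrow> l = l'"
    and c: "c1 * p l1 = 0 \<and> c2 * p l2 = 0 \<and> c3 * p l3 = 0 \<and> c4 * p l4 = 0"
    and d: "d1 * p l1 = 0 \<and> d2 * p l2 = 0 \<and> d3 * p l3 = 0 \<and> d4 * p l4 = 0"
  shows "\<exists>e c d. c1 *\<^sub>R e1 + c2 *\<^sub>R e2 + c3 *\<^sub>R e3 + c4 *\<^sub>R e4 = c *\<^sub>R e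
    \<and> d1 *\<^sub>R e1 + d2 *\<^sub>R e2 + d3 *\<^sub>R e3 + d4 *\<^sub>R (e4 :: 'a::real_vector) = d *\<^sub>R e"
proof -
  have z1: "c1 = 0 \<and> d1 = 0" if "p l1 \<noteq> 0" using c d that by simp
  have z2: "c2 = 0 \<and> d2 = 0" if "p l2 \<noteq> 0" using c d that by simp
  have z3: "c3 = 0 \<and> d3 = 0" if "p l3 \<noteq> 0" using c d that by simp
  have z4: "c4 = 0 \<and> d4 = 0" if "p l4 \<noteq> 0" using c d that by simp
  have ne: "l1 \<noteq> l2" "l1 \<noteq> l3" "l1 \<noteq> l4" "l2 \<noteq> l3" "l2 \<noteq> l4" "l3 \<noteq> l4" using dist by auto
  consider "p l1 = 0" | "p l1 \<noteq> 0" "p l2 = 0" | "p l1 \<noteq> 0" "p l2 \<noteq> 0" "p l3 = 0"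
    | "p l1 \<noteq> 0" "p l2 \<noteq> 0" "p l3 \<noteq> 0" by blast
  then show ?thesis
  proof cases
    case 1
    then have "p l2 \<noteq> 0" "p l3 \<noteq> 0" "p l4 \<noteq> 0"
      using single[of l1 l2] single[of l1 l3] single[of l1 l4] ne by auto
    then show ?thesis using z2 z3 z4 by auto
  next
    case 2
    then have "p l3 \<noteq> 0" "p l4 \<noteq> 0" using single[of l2 l3] single[of l2 l4] ne by auto
    then show ?thesis using 2 z1 z3 z4 by auto
  next
    case 3
    then have "p l4 \<noteq> 0" using single[of l3 l4] ne by auto
    then show ?thesis using 3 z1 z2 z4 by auto
  next
    case 4
    then show ?thesis using z1 z2 z3 by (intro exI[of _ e4]) auto
  qed
qed

text \<open>By Cayley-Hamilton for \<open>K\<close>, \<open>charpoly2 K\<close> evaluated at \<open>L\<close> kills the plane \<open>T(\<real>\<^sup>2)\<close>, so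
  the plane lies in the span of the \<open>e\<^sub>i\<close> with \<open>charpoly2 K l\<^sub>i = 0\<close>, and it takes two of them to
  span a plane.\<close>
lemma invariant_plane_charpoly_roots:
  fixes L :: "R4 \<Rightarrow> R4" and T :: "R2 \<Rightarrow> R4" and K :: "R2 \<Rightarrow> R2"
  assumes L: "linear L" and T: "linear T" and K: "linear K" and injT: "\<And>w. T w = 0 \<Longrightarrow> w = 0"
    and inv: "\<And>v. L (T v) = T (K v)"
    and ne: "e1 \<noteq> 0" "e2 \<noteq> 0" "e3 \<noteq> 0" "e4 \<noteq> 0"
    and ev: "L e1 = l1 *\<^sub>R e1" "L e2 = l2 *\<^sub>R e2" "L e3 = l3 *\<^sub>R e3" "L e4 = l4 *\<^sub>R e4"
    and dist: "distinct [l1, l2, l3, l4]"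
  obtains m1 m2 where "m2 < m1" "m1 \<in> {l1, l2, l3, l4}" "m2 \<in> {l1, l2, l3, l4}"
    "charpoly2 K m1 = 0" "charpoly2 K m2 = 0"
proof -
  have not_parallel: False if "T ex2 = c *\<^sub>R e" "T ey2 = d *\<^sub>R e" for c d e
  proof -
    have "T (d, - c) = 0"
      using that linear_R2_expand[OF T, of d "- c"] by (simp add: algebra_simps)
    then have "(d, - c) = (0::R2)" by (rule injT)
    then have "T ex2 = 0" using that by (simp add: zero_prod_def)
    then have "ex2 = 0" by (rule injT)
    then show False by (simp add: ex2_def zero_prod_def)
  qed
  obtain c1 c2 c3 c4 where X: "T ex2 = c1 *\<^sub>R e1 + c2 *\<^sub>R e2 + c3 *\<^sub>R e3 + c4 *\<^sub>R e4"
    using eigenvectors_span_R4[OF L ne ev dist] .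
  obtain d1 d2 d3 d4 where Y: "T ey2 = d1 *\<^sub>R e1 + d2 *\<^sub>R e2 + d3 *\<^sub>R e3 + d4 *\<^sub>R e4"
    using eigenvectors_span_R4[OF L ne ev dist] .
  note coeffs = invariant_plane_coefficients[OF L T K inv ne ev dist]
  have "\<exists>m1 m2. m1 \<noteq> m2 \<and> m1 \<in> {l1, l2, l3, l4} \<and> m2 \<in> {l1, l2, l3, l4}
      \<and> charpoly2 K m1 = 0 \<and> charpoly2 K m2 = 0"
    using eigencombinations_parallel_if_single_root[OF dist _ coeffs[OF X] coeffs[OF Y]] not_parallel X Y
    by metis
  then show ?thesis using that by (metis linorder_neqE_linordered_idom)
qed

lemma charpoly2_root_left_eigenvector:
  fixes K :: "R2 \<Rightarrow> R2"
  assumes K: "linear K" and roots: "charpoly2 K m = 0" "charpoly2 K m' = 0" "m \<noteq> m'"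
  obtains v where "v \<noteq> 0" "\<And>w. v \<bullet> K w = m * (v \<bullet> w)"
proof -
  define k11 where "k11 = fst (K ex2)"
  define k21 where "k21 = snd (K ex2)"
  define k12 where "k12 = fst (K ey2)"
  define k22 where "k22 = snd (K ey2)"
  have Kab: "K (a, b) = (a * k11 + b * k12, a * k21 + b * k22)" for a b
    by (simp add: linear_R2_expand[OF K] prod_eq_iff k11_def k21_def k12_def k22_def)
  have r: "(m - k11) * (m - k22) - k12 * k21 = 0" "(m' - k11) * (m' - k22) - k12 * k21 = 0"
    using roots by (simp_all add: charpoly2_def k11_def k12_def k21_def k22_def)
  have good: "\<And>w. v \<bullet> K w = m * (v \<bullet> w)"
    if "fst v * (k11 - m) + snd v * k21 = 0" "fst v * k12 + snd v * (k22 - m) = 0" for v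
  proof -
    fix w :: R2
    obtain a b where w: "w = (a, b)" by fastforce
    obtain c e where v: "v = (c, e)" by fastforce
    have h: "c * k11 + e * k21 = c * m" "c * k12 + e * k22 = e * m"
      using that by (simp_all add: v algebra_simps)
    have "v \<bullet> K w = a * (c * k11 + e * k21) + b * (c * k12 + e * k22)"
      by (simp add: v w Kab inner_prod_def algebra_simps)
    also have "\<dots> = m * (v \<bullet> w)" unfolding h by (simp add: v w inner_prod_def algebra_simps)
    finally show "v \<bullet> K w = m * (v \<bullet> w)" .
  qed
  consider "(k21, m - k11) \<noteq> 0" | "(m - k22, k12) \<noteq> 0" | "k21 = 0" "m = k11" "k12 = 0" "m = k22"
    by (auto simp: zero_prod_def)
  then show ?thesis
  proof cases
    case 1
    then show ?thesis using that good[of "(k21, m - k11)"] r(1) by (simp add: algebra_simps)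
  next
    case 2
    then show ?thesis using that good[of "(m - k22, k12)"] r(1) by (simp add: algebra_simps)
  next
    case 3
    then have "(m' - m)\<^sup>2 = 0" using r(2) by (simp add: power2_eq_square)
    then show ?thesis using roots(3) by simp
  qed
qed

lemma left_eigenvectors_not_parallel:
  fixes K :: "'a::real_inner \<Rightarrow> 'a"
  assumes n1: "v1 \<noteq> 0" and n2: "v2 \<noteq> 0"
    and e1: "\<And>w. v1 \<bullet> K w = m1 * (v1 \<bullet> w)" and e2: "\<And>w. v2 \<bullet> K w = m2 * (v2 \<bullet> w)"
    and ne: "m1 \<noteq> m2" and par: "\<alpha> *\<^sub>R v1 = \<beta> *\<^sub>R v2"
  shows "\<alpha> = 0 \<and> \<beta> = 0"
proof -
  have i: "\<alpha> * (v1 \<bullet> w) = \<beta> * (v2 \<bullet> w)" for w using arg_cong[OF par, of "\<lambda>x. x \<bullet> w"] by simp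
  have "\<alpha> * (m1 - m2) * (v1 \<bullet> v1) = 0"
    using i[of "K v1"] i[of v1] by (simp add: e1 e2 algebra_simps)
  then have "\<alpha> = 0" using n1 ne by simp
  then show ?thesis using par n2 by simp
qed

lemma norm_le_sum_abs_inner:
  fixes v1 v2 :: R2
  assumes nonpar: "\<And>\<alpha> \<beta>. \<alpha> *\<^sub>R v1 = \<beta> *\<^sub>R v2 \<Longrightarrow> \<alpha> = 0 \<and> \<beta> = 0" and "v1 \<noteq> 0"
  obtains C where "C > 0" "\<And>w. norm w \<le> C * (\<bar>v1 \<bullet> w\<bar> + \<bar>v2 \<bullet> w\<bar>)"
proof -
  obtain p1 q1 p2 q2 where v: "v1 = (p1, q1)" "v2 = (p2, q2)" by fastforce
  define \<Delta> where "\<Delta> = p1 * q2 - q1 * p2"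
  have "\<Delta> \<noteq> 0"
  proof
    assume "\<Delta> = 0"
    then have "q2 *\<^sub>R v1 = q1 *\<^sub>R v2" "p2 *\<^sub>R v1 = p1 *\<^sub>R v2"
      by (simp_all add: v prod_eq_iff \<Delta>_def mult.commute)
    then have "q1 = 0 \<and> q2 = 0" "p1 = 0 \<and> p2 = 0" using nonpar by blast+
    then show False using \<open>v1 \<noteq> 0\<close> by (simp add: v zero_prod_def)
  qed
  define f where "f w = (v1 \<bullet> w, v2 \<bullet> w)" for w
  have "linear f" unfolding f_def
    by (intro bounded_linear.linear bounded_linear_Pair bounded_linear_inner_right)
  moreover have "inj f"
  unfolding linear_injective_0[OF \<open>linear f\<close>]
  proof (intro allI impI)
    fix w :: R2 assume "f w = 0"
    moreover obtain a b where w: "w = (a, b)" by fastforce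
    ultimately have eqs: "p1 * a + q1 * b = 0" "p2 * a + q2 * b = 0"
      by (simp_all add: f_def v inner_prod_def zero_prod_def)
    have "\<Delta> * a = q2 * (p1 * a + q1 * b) - q1 * (p2 * a + q2 * b)"
      "\<Delta> * b = p1 * (p2 * a + q2 * b) - p2 * (p1 * a + q1 * b)"
      by (simp_all add: \<Delta>_def algebra_simps)
    then have "\<Delta> * a = 0" "\<Delta> * b = 0" unfolding eqs by simp_all
    then show "w = 0" using \<open>\<Delta> \<noteq> 0\<close> by (simp add: w zero_prod_def)
  qed
  ultimately obtain B where B: "B > 0" "\<And>w. B * norm w \<le> norm (f w)"
    using linear_inj_bounded_below_pos by blast
  have "norm w \<le> inverse B * (\<bar>v1 \<bullet> w\<bar> + \<bar>v2 \<bullet> w\<bar>)" for w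
  proof -
    have "B * norm w \<le> \<bar>v1 \<bullet> w\<bar> + \<bar>v2 \<bullet> w\<bar>"
      using B(2)[of w] norm_Pair_le[of "v1 \<bullet> w" "v2 \<bullet> w"] by (simp add: f_def)
    then show ?thesis using B(1) by (simp add: field_simps)
  qed
  then show ?thesis using that B(1) by (meson positive_imp_inverse_positive)
qed

definition left_eigendata :: "(R2 \<Rightarrow> R2) \<Rightarrow> R2 \<Rightarrow> R2 \<Rightarrow> real \<Rightarrow> real \<Rightarrow> real \<Rightarrow> bool" where
  "left_eigendata K v1 v2 m1 m2 C \<longleftrightarrow> v1 \<noteq> 0 \<and> v2 \<noteq> 0 \<and> m2 < m1 \<and>
     (\<forall>w. v1 \<bullet> K w = m1 * (v1 \<bullet> w)) \<and> (\<forall>w. v2 \<bullet> K w = m2 * (v2 \<bullet> w)) \<and>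
     C > 0 \<and> (\<forall>w. norm w \<le> C * (\<bar>v1 \<bullet> w\<bar> + \<bar>v2 \<bullet> w\<bar>))"

lemma left_eigendata_exists:
  assumes K: "linear K" and roots: "charpoly2 K m1 = 0" "charpoly2 K m2 = 0" "m2 < m1"
  obtains v1 v2 C where "left_eigendata K v1 v2 m1 m2 C"
proof -
  obtain v1 where v1: "v1 \<noteq> 0" "\<And>w. v1 \<bullet> K w = m1 * (v1 \<bullet> w)"
    using charpoly2_root_left_eigenvector[OF K roots(1,2)] roots(3) by blast
  obtain v2 where v2: "v2 \<noteq> 0" "\<And>w. v2 \<bullet> K w = m2 * (v2 \<bullet> w)"
    using charpoly2_root_left_eigenvector[OF K roots(2,1)] roots(3) by blast
  obtain C where "C > 0" "\<And>w. norm w \<le> C * (\<bar>v1 \<bullet> w\<bar> + \<bar>v2 \<bullet> w\<bar>)"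
    using norm_le_sum_abs_inner left_eigenvectors_not_parallel[OF v1(1) v2(1) v1(2) v2(2)] roots(3) v1(1)
    by (metis order_less_irrefl)
  then show ?thesis using that v1 v2 roots(3) unfolding left_eigendata_def by blast
qed

lemma sum_abs_squared_le: "(\<bar>x\<bar> + \<bar>y\<bar>)\<^sup>2 \<le> 2 * (x\<^sup>2 + y\<^sup>2)" for x y :: real
proof -
  have "0 \<le> (\<bar>x\<bar> - \<bar>y\<bar>)\<^sup>2" by simp
  then show ?thesis by (simp add: power2_eq_square algebra_simps abs_mult_self_eq)
qed

lemma left_eigendata_perturbation:
  assumes eig: "left_eigendata K v1 v2 m1 m2 C" and r: "norm r \<le> \<epsilon> * norm \<Delta>" and \<epsilon>: "\<epsilon> \<ge> 0"
  shows "\<bar>(v1 \<bullet> \<Delta>) * (v1 \<bullet> r)\<bar> + \<bar>(v2 \<bullet> \<Delta>) * (v2 \<bullet> r)\<bar>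
      \<le> 2 * (norm v1 + norm v2) * C * \<epsilon> * ((v1 \<bullet> \<Delta>)\<^sup>2 + (v2 \<bullet> \<Delta>)\<^sup>2)"
proof -
  define M where "M = norm v1 + norm v2"
  define s where "s = \<bar>v1 \<bullet> \<Delta>\<bar> + \<bar>v2 \<bullet> \<Delta>\<bar>"
  have C: "C > 0" "norm \<Delta> \<le> C * s" using eig unfolding left_eigendata_def s_def by blast+
  have nr: "norm r \<le> \<epsilon> * C * s"
    using r mult_left_mono[OF C(2) \<epsilon>] by (simp add: mult.assoc)
  have vr: "\<bar>v \<bullet> r\<bar> \<le> M * (\<epsilon> * C * s)" if "norm v \<le> M" for v
    using order_trans[OF Cauchy_Schwarz_ineq2[of v r] mult_mono[OF that nr]] that norm_ge_zero[of v]
      norm_ge_zero[of r] by linarith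
  have "\<bar>(v1 \<bullet> \<Delta>) * (v1 \<bullet> r)\<bar> + \<bar>(v2 \<bullet> \<Delta>) * (v2 \<bullet> r)\<bar> \<le> s * (M * (\<epsilon> * C * s))"
    using vr[of v1] vr[of v2] unfolding abs_mult s_def M_def
    by (simp add: distrib_right mult_left_mono add_mono)
  also have "\<dots> = M * C * \<epsilon> * s\<^sup>2" by (simp add: power2_eq_square algebra_simps)
  also have "\<dots> \<le> M * C * \<epsilon> * (2 * ((v1 \<bullet> \<Delta>)\<^sup>2 + (v2 \<bullet> \<Delta>)\<^sup>2))"
  proof (rule mult_left_mono)
    show "s\<^sup>2 \<le> 2 * ((v1 \<bullet> \<Delta>)\<^sup>2 + (v2 \<bullet> \<Delta>)\<^sup>2)"
      unfolding s_def by (rule sum_abs_squared_le)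
  qed (use C \<epsilon> in \<open>simp add: M_def\<close>)
  finally show ?thesis by (simp add: M_def algebra_simps)
qed

lemma left_eigendata_coords_nonzero:
  assumes "left_eigendata K v1 v2 m1 m2 C" "w \<noteq> 0"
  shows "(v1 \<bullet> w)\<^sup>2 + (v2 \<bullet> w)\<^sup>2 > 0"
proof -
  have "norm w \<le> C * (\<bar>v1 \<bullet> w\<bar> + \<bar>v2 \<bullet> w\<bar>)" using assms(1) unfolding left_eigendata_def by blast
  then have "v1 \<bullet> w \<noteq> 0 \<or> v2 \<bullet> w \<noteq> 0" using assms(2) by auto
  then show ?thesis by (auto simp: add_pos_nonneg add_nonneg_pos)
qed

lemma left_eigendata_norm_squared_le:
  assumes "left_eigendata K v1 v2 m1 m2 C"
  shows "(norm w)\<^sup>2 \<le> 2 * C\<^sup>2 * ((v1 \<bullet> w)\<^sup>2 + (v2 \<bullet> w)\<^sup>2)"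
proof -
  have "norm w \<le> C * (\<bar>v1 \<bullet> w\<bar> + \<bar>v2 \<bullet> w\<bar>)" "C > 0" using assms unfolding left_eigendata_def by blast+
  then have "(norm w)\<^sup>2 \<le> C\<^sup>2 * (\<bar>v1 \<bullet> w\<bar> + \<bar>v2 \<bullet> w\<bar>)\<^sup>2"
    by (metis norm_ge_zero power_mono power_mult_distrib)
  also have "\<dots> \<le> C\<^sup>2 * (2 * ((v1 \<bullet> w)\<^sup>2 + (v2 \<bullet> w)\<^sup>2))"
    by (intro mult_left_mono sum_abs_squared_le) simp
  finally show ?thesis by (simp add: algebra_simps)
qed

lemma left_eigendata_sublevel:
  assumes eig: "left_eigendata K v1 v2 m1 m2 C" and d: "d > 0"
  shows "compact {w. (v1 \<bullet> w)\<^sup>2 + (v2 \<bullet> w)\<^sup>2 \<le> d\<^sup>2 / (4 * C\<^sup>2)}"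
    and "(v1 \<bullet> w)\<^sup>2 + (v2 \<bullet> w)\<^sup>2 \<le> d\<^sup>2 / (4 * C\<^sup>2) \<Longrightarrow> norm w < d"
proof -
  have C: "C > 0" using eig unfolding left_eigendata_def by blast
  have small: "norm w < d" if "(v1 \<bullet> w)\<^sup>2 + (v2 \<bullet> w)\<^sup>2 \<le> d\<^sup>2 / (4 * C\<^sup>2)" for w
  proof -
    have "(norm w)\<^sup>2 \<le> 2 * C\<^sup>2 * (d\<^sup>2 / (4 * C\<^sup>2))"
      using left_eigendata_norm_squared_le[OF eig, of w] mult_left_mono[OF that, of "2 * C\<^sup>2"] by simp
    also have "\<dots> < d\<^sup>2" using C d by simp
    finally show ?thesis by (rule power2_less_imp_less) (use d in simp)
  qed
  then show "(v1 \<bullet> w)\<^sup>2 + (v2 \<bullet> w)\<^sup>2 \<le> d\<^sup>2 / (4 * C\<^sup>2) \<Longrightarrow> norm w < d" .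
  have "closed {w. (v1 \<bullet> w)\<^sup>2 + (v2 \<bullet> w)\<^sup>2 \<le> d\<^sup>2 / (4 * C\<^sup>2)}"
    by (intro closed_Collect_le continuous_intros)
  moreover have "bounded {w. (v1 \<bullet> w)\<^sup>2 + (v2 \<bullet> w)\<^sup>2 \<le> d\<^sup>2 / (4 * C\<^sup>2)}"
    using small unfolding bounded_iff by (meson less_imp_le mem_Collect_eq)
  ultimately show "compact {w. (v1 \<bullet> w)\<^sup>2 + (v2 \<bullet> w)\<^sup>2 \<le> d\<^sup>2 / (4 * C\<^sup>2)}"
    by (simp add: compact_eq_bounded_closed)
qed

lemma cone_function_derivative_bound:
  assumes eig: "left_eigendata K v1 v2 m1 m2 C" and pos: "m1 > 0"
    and r: "norm r \<le> (m1 - max m2 0) / (8 * (norm v1 + norm v2) * C) * norm \<Delta>"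
    and cone: "(v2 \<bullet> \<Delta>)\<^sup>2 \<le> (v1 \<bullet> \<Delta>)\<^sup>2"
  shows "2 * (v1 \<bullet> \<Delta>) * (v1 \<bullet> (K \<Delta> + r)) - 2 * (v2 \<bullet> \<Delta>) * (v2 \<bullet> (K \<Delta> + r))
    \<ge> (m1 - max m2 0) * (v1 \<bullet> \<Delta>)\<^sup>2"
proof -
  define c0 where "c0 = m1 - max m2 0"
  define u1 where "u1 = v1 \<bullet> \<Delta>"
  define u2 where "u2 = v2 \<bullet> \<Delta>"
  have E: "v1 \<noteq> 0" "m2 < m1" "\<And>w. v1 \<bullet> K w = m1 * (v1 \<bullet> w)" "\<And>w. v2 \<bullet> K w = m2 * (v2 \<bullet> w)" "C > 0"
    using eig unfolding left_eigendata_def by blast+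
  have c0: "c0 > 0" using E(2) pos by (simp add: c0_def)
  define M where "M = norm v1 + norm v2"
  have M: "M > 0" using E(1) by (simp add: M_def add_pos_nonneg)
  have "\<bar>u1 * (v1 \<bullet> r)\<bar> + \<bar>u2 * (v2 \<bullet> r)\<bar> \<le> 2 * M * C * (c0 / (8 * M * C)) * (u1\<^sup>2 + u2\<^sup>2)"
    unfolding u1_def u2_def c0_def M_def
    by (rule left_eigendata_perturbation[OF eig r]) (use c0 M E(5) in \<open>simp add: c0_def M_def\<close>)
  also have "2 * M * C * (c0 / (8 * M * C)) = c0 / 4"
    using M E(5) by (simp add: field_simps)
  finally have err: "\<bar>u1 * (v1 \<bullet> r)\<bar> + \<bar>u2 * (v2 \<bullet> r)\<bar> \<le> c0 / 4 * (u1\<^sup>2 + u2\<^sup>2)" .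
  have main: "2 * m1 * u1\<^sup>2 - 2 * m2 * u2\<^sup>2 \<ge> 2 * c0 * u1\<^sup>2"
  proof (cases "m2 \<le> 0")
    case True
    then show ?thesis by (simp add: c0_def mult_nonpos_nonneg)
  next
    case False
    then have "m2 * u2\<^sup>2 \<le> m2 * u1\<^sup>2" using cone by (simp add: u1_def u2_def)
    then show ?thesis using False by (simp add: c0_def algebra_simps)
  qed
  have "c0 / 4 * (u1\<^sup>2 + u2\<^sup>2) \<le> c0 / 2 * u1\<^sup>2" using cone c0 by (simp add: u1_def u2_def)
  then show ?thesis using main err
    by (simp add: E(3,4) inner_add_right u1_def[symmetric] u2_def[symmetric] c0_def[symmetric]
        power2_eq_square algebra_simps abs_le_iff)
qed

lemma cone_difference_growth:
  fixes \<Delta> r :: "real \<Rightarrow> R2"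
  assumes eig: "left_eigendata K v1 v2 m1 m2 C" and pos: "m1 > 0"
    and cont: "continuous_on {0..} \<Delta>"
    and der: "\<And>t. t > 0 \<Longrightarrow> (\<Delta> has_vector_derivative K (\<Delta> t) + r t) (at t)"
    and small: "\<And>t. t > 0 \<Longrightarrow> norm (r t) \<le> (m1 - max m2 0) / (8 * (norm v1 + norm v2) * C) * norm (\<Delta> t)"
    and start: "(v2 \<bullet> \<Delta> 0)\<^sup>2 < (v1 \<bullet> \<Delta> 0)\<^sup>2" and T: "T \<ge> 0"
  shows "(v1 \<bullet> \<Delta> T)\<^sup>2 - (v2 \<bullet> \<Delta> T)\<^sup>2
    \<ge> ((v1 \<bullet> \<Delta> 0)\<^sup>2 - (v2 \<bullet> \<Delta> 0)\<^sup>2) + (m1 - max m2 0) * ((v1 \<bullet> \<Delta> 0)\<^sup>2 - (v2 \<bullet> \<Delta> 0)\<^sup>2) * T"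
proof -
  define c0 where "c0 = m1 - max m2 0"
  define G where "G t = (v1 \<bullet> \<Delta> t)\<^sup>2 - (v2 \<bullet> \<Delta> t)\<^sup>2" for t
  define G' where "G' t = 2 * (v1 \<bullet> \<Delta> t) * (v1 \<bullet> (K (\<Delta> t) + r t))
    - 2 * (v2 \<bullet> \<Delta> t) * (v2 \<bullet> (K (\<Delta> t) + r t))" for t
  have c0: "c0 > 0" using eig pos unfolding left_eigendata_def c0_def by auto
  have Gc: "continuous_on {0..} G" unfolding G_def[abs_def] using cont by (intro continuous_intros)
  have Gd: "(G has_real_derivative G' t) (at t)" if "t > 0" for t
  proof -
    have "((\<lambda>x. (v1 \<bullet> x)\<^sup>2 - (v2 \<bullet> x)\<^sup>2) has_derivative
        (\<lambda>h. 2 * (v1 \<bullet> \<Delta> t) * (v1 \<bullet> h) - 2 * (v2 \<bullet> \<Delta> t) * (v2 \<bullet> h))) (at (\<Delta> t))"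
      by (auto intro!: derivative_eq_intros simp: power2_eq_square algebra_simps)
    from has_real_derivative_comp_path[OF der[OF that] this] show ?thesis
      unfolding G_def[abs_def] G'_def by simp
  qed
  have super: "G' t \<ge> c0 * G t" if t: "t > 0" and "G t \<ge> 0" for t
  proof -
    have "(v2 \<bullet> \<Delta> t)\<^sup>2 \<le> (v1 \<bullet> \<Delta> t)\<^sup>2" using \<open>G t \<ge> 0\<close> by (simp add: G_def)
    then have "G' t \<ge> c0 * (v1 \<bullet> \<Delta> t)\<^sup>2"
      using cone_function_derivative_bound[OF eig pos small[OF t]] by (simp add: G'_def c0_def)
    moreover have "c0 * (v1 \<bullet> \<Delta> t)\<^sup>2 \<ge> c0 * G t" using c0 by (simp add: G_def)
    ultimately show ?thesis by linarith
  qed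
  have "G T \<ge> G 0 + c0 * G 0 * T"
    by (rule linear_growth_of_positive_supersolution[OF Gc Gd super _ _ T]) (use c0 start in \<open>auto simp: G_def\<close>)
  then show ?thesis by (simp add: G_def c0_def)
qed

section \<open>The characteristic field and the jet of a solution\<close>

lemma pd_eta: "pd f v = (\<lambda>P. frechet_derivative f (at P) v)"
  by (rule ext) (simp add: pd_def)

lemma Ck_on_2_open:
  assumes "open S"
  shows "Ck_on 2 S f \<longleftrightarrow> (\<forall>x\<in>S. f differentiable (at x)) \<and>
    (\<forall>i\<in>Basis. (\<forall>x\<in>S. pd f i differentiable (at x)) \<and> (\<forall>j\<in>Basis. continuous_on S (pd2 f j i)))"
  by (simp add: numeral_2_eq_2 differentiable_on_eq_differentiable_at[OF assms] pd_eta pd2_def[abs_def])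

lemma pd_has_derivative:
  "pd f i differentiable (at P) \<Longrightarrow> (pd f i has_derivative (\<lambda>v. pd2 f v i P)) (at P)"
  by (simp add: pd2_def pd_eta frechet_derivative_works)

lemma pd_uminus: "f differentiable (at P) \<Longrightarrow> pd (\<lambda>x. - f x) v P = - pd f v P"
  unfolding pd_def using frechet_derivative_at[OF has_derivative_minus[OF frechet_derivative_works[THEN iffD1]]]
  by (metis frechet_derivative_works)

lemma Ck_on_uminus: "Ck_on k UNIV f \<Longrightarrow> Ck_on k UNIV (\<lambda>x. - f x)"
  for f :: "'a::euclidean_space \<Rightarrow> real"
proof (induction k arbitrary: f)
  case 0
  then show ?case by (auto intro: continuous_intros)
next
  case (Suc k)
  then have "f differentiable (at x)" for x by (auto simp: differentiable_on_eq_differentiable_at)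
  then have "(\<lambda>x. frechet_derivative (\<lambda>x. - f x) (at x) i) = (\<lambda>x. - frechet_derivative f (at x) i)" for i
    using pd_uminus unfolding pd_def by blast
  then show ?case using Suc by (auto intro: differentiable_on_minus)
qed

lemma frechet_derivative_R4_expand:
  fixes f :: "R4 \<Rightarrow> real"
  assumes "f differentiable (at P)"
  shows "frechet_derivative f (at P) (a, b, c, d) = a * pd f ex4 P + b * pd f ey4 P + c * pd f ep4 P + d * pd f eq4 P"
  using linear_R4_expand[OF has_derivative_linear[OF assms[unfolded frechet_derivative_works]]]
  by (simp add: pd_def)

lemma Basis_R2: "(Basis :: R2 set) = {ex2, ey2}"
  by (simp add: Basis_prod_def ex2_def ey2_def insert_commute)

lemma Basis_R4: "(Basis :: R4 set) = {ex4, ey4, ep4, eq4}"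
  by (simp add: Basis_prod_def ex4_def ey4_def ep4_def eq4_def zero_prod_def image_Un insert_commute)

lemma proj_bounded_linear: "bounded_linear proj"
  unfolding proj_def by (auto intro!: bounded_linear_intros)

lemma norm_proj_le: "norm (proj P) \<le> norm P"
proof -
  obtain a b c d where P: "P = (a, b, c, d)" by (metis prod.exhaust)
  have "sqrt (a\<^sup>2 + b\<^sup>2) \<le> sqrt (a\<^sup>2 + (b\<^sup>2 + (c\<^sup>2 + d\<^sup>2)))" by (intro real_sqrt_le_mono) auto
  then show ?thesis by (simp add: P proj_def norm_Pair)
qed

text \<open>By Gronwall's inequality run backwards in time, the time-\<open>T\<close> map has a Lipschitz inverse
  on bounded sets.\<close>
lemma negligible_if_time_map_null:
  fixes \<Gamma> :: "R2 \<Rightarrow> real \<Rightarrow> R4" and X :: "R4 \<Rightarrow> R4" and J :: "R2 \<Rightarrow> R4"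
  assumes cont: "\<And>p. p \<in> E \<Longrightarrow> continuous_on {0..} (\<Gamma> p)"
    and der: "\<And>p t. p \<in> E \<Longrightarrow> t > 0 \<Longrightarrow> (\<Gamma> p has_vector_derivative X (\<Gamma> p t)) (at t)"
    and start: "\<And>p. p \<in> E \<Longrightarrow> proj (\<Gamma> p 0) = p"
    and bounded: "\<And>p t. p \<in> E \<Longrightarrow> t \<ge> 0 \<Longrightarrow> norm (\<Gamma> p t) \<le> R"
    and lipX: "\<And>x y. x \<in> cball 0 R \<Longrightarrow> y \<in> cball 0 R \<Longrightarrow> norm (X x - X y) \<le> B * norm (x - y)" "B \<ge> 0"
    and graph: "\<And>p. p \<in> E \<Longrightarrow> \<Gamma> p T = J (proj (\<Gamma> p T)) \<and> proj (\<Gamma> p T) \<in> S"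
    and lipJ: "\<And>x y. x \<in> S \<Longrightarrow> y \<in> S \<Longrightarrow> norm (J x - J y) \<le> BJ * norm (x - y)"
    and null: "negligible ((\<lambda>p. proj (\<Gamma> p T)) ` E)" and T: "T \<ge> 0"
  shows "negligible E"
proof (rule negligible_inverse_lipschitz[OF null, where B="exp (B * T) * BJ"])
  fix p p' assume p: "p \<in> E" and p': "p' \<in> E"
  have "proj (\<Gamma> p 0 - \<Gamma> p' 0) = proj (\<Gamma> p 0) - proj (\<Gamma> p' 0)" by (simp add: proj_def)
  then have "p - p' = proj (\<Gamma> p 0 - \<Gamma> p' 0)" using start[OF p] start[OF p'] by simp
  then have "norm (p - p') \<le> norm (\<Gamma> p 0 - \<Gamma> p' 0)" using norm_proj_le by metis
  also have "\<dots> \<le> exp (B * T) * norm (\<Gamma> p T - \<Gamma> p' T)"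
    using p p' bounded lipX(1) by (intro gronwall_backward_distance[OF cont cont der der _ lipX(2) T]) auto
  also have "\<dots> \<le> exp (B * T) * (BJ * norm (proj (\<Gamma> p T) - proj (\<Gamma> p' T)))"
    using graph[OF p] graph[OF p'] lipJ by (metis exp_ge_zero mult_left_mono)
  finally show "norm (p - p') \<le> exp (B * T) * BJ * norm (proj (\<Gamma> p T) - proj (\<Gamma> p' T))"
    by (simp add: mult.assoc)
qed

lemma stable_loc_shift:
  assumes \<gamma>: "\<forall>t\<ge>0. (\<gamma> has_vector_derivative xiH H (\<gamma> t)) (at t within {0..}) \<and> \<gamma> t \<in> N"
    and lim: "(\<gamma> \<longlongrightarrow> 0) at_top" and s: "s \<ge> 0"
  shows "\<gamma> s \<in> stable_loc H N"
  unfolding stable_loc_def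
proof (intro CollectI conjI exI[of _ "\<lambda>t. \<gamma> (s + t)"] allI impI)
  fix t :: real assume t: "t \<ge> 0"
  have "(\<gamma> has_vector_derivative xiH H (\<gamma> (s + t))) (at (s + t) within {0..})"
    using \<gamma> s t by simp
  then have "(\<gamma> has_vector_derivative xiH H (\<gamma> (s + t))) (at (s + t) within (\<lambda>t. s + t) ` {0..})"
    by (rule has_vector_derivative_within_subset) (use s in auto)
  moreover have "((\<lambda>t. s + t) has_vector_derivative 1) (at t within {0..})" by (auto intro!: derivative_eq_intros)
  ultimately show "((\<lambda>t. \<gamma> (s + t)) has_vector_derivative xiH H (\<gamma> (s + t))) (at t within {0..})"
    using vector_diff_chain_within by (fastforce simp: o_def)
  show "\<gamma> (s + t) \<in> N" using \<gamma> s t by simp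
next
  show "((\<lambda>t. \<gamma> (s + t)) \<longlongrightarrow> 0) at_top"
    by (rule filterlim_compose[OF lim filterlim_tendsto_add_at_top[OF tendsto_const filterlim_ident]])
qed (use \<gamma> s in auto)

locale hamiltonian =
  fixes H :: "R4 \<Rightarrow> real"
  assumes H_C2: "Ck_on 2 UNIV H" and critical: "\<And>v. pd H v 0 = 0"
begin

lemma differentiable: "H differentiable (at P)"
  using H_C2 unfolding Ck_on_2_open[OF open_UNIV] by blast

lemma pd_differentiable: "i \<in> Basis \<Longrightarrow> pd H i differentiable (at P)"
  using H_C2 unfolding Ck_on_2_open[OF open_UNIV] by blast

lemma continuous_pd2: "i \<in> Basis \<Longrightarrow> j \<in> Basis \<Longrightarrow> continuous_on UNIV (pd2 H j i)"
  using H_C2 by (simp add: Ck_on_2_open)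

definition Dxi :: "R4 \<Rightarrow> R4 \<Rightarrow> R4" where
  "Dxi P v = (pd2 H v ep4 P, pd2 H v eq4 P, - pd2 H v ex4 P, - pd2 H v ey4 P)"

lemma xi_has_derivative: "(xiH H has_derivative Dxi P) (at P)"
proof -
  have "(pd H i has_derivative (\<lambda>v. pd2 H v i P)) (at P)" if "i \<in> {ex4, ey4, ep4, eq4}" for i
    using that by (intro pd_has_derivative pd_differentiable) (simp add: Basis_R4)
  then show ?thesis
    unfolding xiH_def[abs_def] Dxi_def[abs_def]
    by (intro has_derivative_Pair has_derivative_minus) (simp_all add: pd_eta)
qed

lemma frechet_derivative_xi: "frechet_derivative (xiH H) (at P) = Dxi P"
  using xi_has_derivative frechet_derivative_at by metis

lemma xi_differentiable: "xiH H differentiable (at P)"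
  using xi_has_derivative differentiable_def by blast

lemma continuous_xi_partials: "j \<in> Basis \<Longrightarrow> continuous_on UNIV (\<lambda>P. frechet_derivative (xiH H) (at P) j)"
  unfolding frechet_derivative_xi Dxi_def
  by (intro continuous_on_Pair continuous_on_minus continuous_on_eq[OF continuous_pd2, of _ j])
    (auto simp: Basis_R4)

lemma linear_Dxi: "linear (Dxi P)"
  using xi_has_derivative has_derivative_linear by blast

definition xi_base :: "R4 \<Rightarrow> R2" where "xi_base P = proj (xiH H P)"

lemma xi_base_eq: "xi_base P = (pd H ep4 P, pd H eq4 P)"
  by (simp add: xi_base_def xiH_def proj_def)

lemma xi_base_zero: "xi_base 0 = 0"
  using critical by (simp add: xi_base_eq zero_prod_def)

lemma xi_base_has_derivative: "(xi_base has_derivative (\<lambda>v. proj (Dxi P v))) (at P)"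
  unfolding xi_base_def[abs_def]
  using bounded_linear.has_derivative[OF proj_bounded_linear xi_has_derivative] .

lemma frechet_derivative_H_vertical:
  "frechet_derivative H (at P) (0, 0, c, d) = xi_base P \<bullet> (c, d)"
  by (simp add: frechet_derivative_R4_expand[OF differentiable] xi_base_eq inner_prod_def)

lemma xiH_uminus: "xiH (\<lambda>x. - H x) = (\<lambda>P. - xiH H P)"
  by (rule ext) (simp add: xiH_def pd_uminus[OF differentiable])

lemma unstable_loc_eq_stable_loc_uminus: "unstable_loc H N = stable_loc (\<lambda>x. - H x) N"
proof -
  have refl: "uminus ` {0..} = {..0::real}" "uminus ` {..0} = {0::real..}" by (auto simp: image_iff)
  have "P \<in> stable_loc (\<lambda>x. - H x) N" if P: "P \<in> unstable_loc H N" for P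
  proof -
    obtain \<gamma> where \<gamma>: "P \<in> N" "\<gamma> 0 = P" "(\<gamma> \<longlongrightarrow> 0) at_bot"
      "\<forall>t\<le>0. (\<gamma> has_vector_derivative xiH H (\<gamma> t)) (at t within {..0}) \<and> \<gamma> t \<in> N"
      using P unfolding unstable_loc_def by blast
    show ?thesis unfolding stable_loc_def xiH_uminus
      using \<gamma> has_vector_derivative_reflect[of \<gamma> _ _ "{0..}", unfolded refl]
        filterlim_compose[OF \<gamma>(3) filterlim_uminus_at_bot_at_top]
      by (intro CollectI conjI exI[of _ "\<lambda>t. \<gamma> (- t)"]) auto
  qed
  moreover have "P \<in> unstable_loc H N" if P: "P \<in> stable_loc (\<lambda>x. - H x) N" for P
  proof -
    obtain \<gamma> where \<gamma>: "P \<in> N" "\<gamma> 0 = P" "(\<gamma> \<longlongrightarrow> 0) at_top"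
      "\<forall>t\<ge>0. (\<gamma> has_vector_derivative - xiH H (\<gamma> t)) (at t within {0..}) \<and> \<gamma> t \<in> N"
      using P unfolding stable_loc_def xiH_uminus by blast
    have "((\<lambda>t. \<gamma> (- t)) has_vector_derivative xiH H (\<gamma> (- t))) (at t within {..0})" if "t \<le> 0" for t
      using has_vector_derivative_reflect[of \<gamma> "- xiH H (\<gamma> (- t))" t "{..0}", unfolded refl] \<gamma>(4) that
      by simp
    then show ?thesis unfolding unstable_loc_def
      using \<gamma> filterlim_compose[OF \<gamma>(3) filterlim_uminus_at_top_at_bot]
      by (intro CollectI conjI exI[of _ "\<lambda>t. \<gamma> (- t)"]) auto
  qed
  ultimately show ?thesis by blast
qed

end

locale hj_solution = hamiltonian +
  fixes z :: "R2 \<Rightarrow> real" and U :: "R2 set"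
  assumes U: "open U" "0 \<in> U" and z_C2: "Ck_on 2 U z" and solves: "solves_HJ H U z"
    and grad_zero: "pd z ex2 0 = 0" "pd z ey2 0 = 0"
begin

lemma z_differentiable: "w \<in> U \<Longrightarrow> z differentiable (at w)"
  using z_C2 U by (simp add: Ck_on_2_open)

lemma pd_z_differentiable: "i \<in> Basis \<Longrightarrow> w \<in> U \<Longrightarrow> pd z i differentiable (at w)"
  using z_C2 U by (simp add: Ck_on_2_open)

lemma continuous_pd2_z: "i \<in> Basis \<Longrightarrow> j \<in> Basis \<Longrightarrow> continuous_on U (pd2 z j i)"
  using z_C2 U by (simp add: Ck_on_2_open)

lemma pd2_z_symmetric: "pd2 z ey2 ex2 0 = pd2 z ex2 ey2 0"
  by (rule pd2_commute[OF U z_differentiable]) (auto intro: pd_z_differentiable U simp: Basis_R2)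

definition Djet :: "R2 \<Rightarrow> R2 \<Rightarrow> R4" where
  "Djet w v = (fst v, snd v, pd2 z v ex2 w, pd2 z v ey2 w)"

lemma jet_has_derivative: "w \<in> U \<Longrightarrow> (jet z has_derivative Djet w) (at w)"
  unfolding jet_def[abs_def] Djet_def[abs_def]
  by (intro has_derivative_Pair has_derivative_fst has_derivative_snd has_derivative_ident
      pd_has_derivative pd_z_differentiable) (auto simp: Basis_R2)

lemma jet_differentiable: "w \<in> U \<Longrightarrow> jet z differentiable (at w)"
  using jet_has_derivative differentiable_def by blast

lemma continuous_jet_partials: "j \<in> Basis \<Longrightarrow> continuous_on U (\<lambda>w. frechet_derivative (jet z) (at w) j)"
proof -
  assume j: "j \<in> Basis"
  have "continuous_on U (\<lambda>w. Djet w j)"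
    unfolding Djet_def using continuous_pd2_z[of _ j] j
    by (intro continuous_on_Pair continuous_on_const) (auto simp: Basis_R2)
  then show ?thesis
    using jet_has_derivative frechet_derivative_at by (metis (no_types, lifting) continuous_on_eq)
qed

lemma jet_zero: "jet z 0 = 0"
  using grad_zero by (simp add: jet_def zero_prod_def)

lemma proj_jet: "proj (jet z w) = w"
  by (simp add: jet_def proj_def)

lemma linear_Djet: "linear (Djet 0)"
  using jet_has_derivative[OF U(2)] has_derivative_linear by blast

lemma proj_Djet: "proj (Djet w v) = v"
  by (simp add: Djet_def proj_def)

definition char_field :: "R2 \<Rightarrow> R2" where "char_field w = xi_base (jet z w)"

definition char_lin :: "R2 \<Rightarrow> R2" where "char_lin v = proj (Dxi 0 (Djet 0 v))"

lemma char_field_has_derivative: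
  "w \<in> U \<Longrightarrow> (char_field has_derivative (\<lambda>v. proj (Dxi (jet z w) (Djet w v)))) (at w)"
  unfolding char_field_def[abs_def]
  by (rule has_derivative_compose[OF jet_has_derivative xi_base_has_derivative])

lemma char_lin_has_derivative: "(char_field has_derivative char_lin) (at 0)"
  using char_field_has_derivative[OF U(2)] by (simp add: char_lin_def[abs_def] jet_zero)

lemma linear_char_lin: "linear char_lin"
  using char_lin_has_derivative has_derivative_linear by blast

lemma continuous_char_field_partials:
  "i \<in> Basis \<Longrightarrow> isCont (\<lambda>w. frechet_derivative char_field (at w) i) 0"
proof -
  assume i: "i \<in> Basis"
  have jet: "isCont (jet z) 0" using jet_has_derivative[OF U(2)] has_derivative_continuous by blast
  have "isCont (\<lambda>w. pd2 H (Djet w i) k (jet z w)) 0" if "k \<in> Basis" for k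
  proof -
    have "pd2 H (Djet w i) k (jet z w) = fst i * pd2 H ex4 k (jet z w) + snd i * pd2 H ey4 k (jet z w)
        + pd2 z i ex2 w * pd2 H ep4 k (jet z w) + pd2 z i ey2 w * pd2 H eq4 k (jet z w)" for w
      using linear_R4_expand[OF has_derivative_linear[OF pd_has_derivative[OF pd_differentiable[OF that]]]]
      by (simp add: Djet_def)
    moreover have "isCont (\<lambda>w. pd2 H j k (jet z w)) 0" if "j \<in> Basis" for j
      using continuous_pd2[OF \<open>k \<in> Basis\<close> that] jet
      by (metis continuous_on_eq_continuous_at isCont_o2 open_UNIV UNIV_I)
    moreover have "isCont (pd2 z i j) 0" if "j \<in> Basis" for j
      using continuous_pd2_z[OF that i] U continuous_on_eq_continuous_at by blast
    ultimately show ?thesis by (auto intro!: continuous_intros simp: Basis_R2 Basis_R4)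
  qed
  then have cont: "isCont (\<lambda>w. proj (Dxi (jet z w) (Djet w i))) 0"
    unfolding Dxi_def proj_def by (auto intro!: continuous_intros simp: Basis_R4)
  have ev: "\<forall>\<^sub>F w in nhds 0. frechet_derivative char_field (at w) i = proj (Dxi (jet z w) (Djet w i))"
  proof (rule eventually_mono[OF eventually_nhds_in_open[OF U]])
    fix w assume "w \<in> U"
    from frechet_derivative_at[OF char_field_has_derivative[OF this]]
    show "frechet_derivative char_field (at w) i = proj (Dxi (jet z w) (Djet w i))" by metis
  qed
  show ?thesis using isCont_cong[OF ev] cont by simp
qed

lemma char_field_strict_derivative:
  assumes "e > 0"
  obtains d where "d > 0" "ball 0 d \<subseteq> U"
    "\<And>x y. x \<in> ball 0 d \<Longrightarrow> y \<in> ball 0 d \<Longrightarrow>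
       norm (char_field x - char_field y - char_lin (x - y)) \<le> e * norm (x - y)"
proof -
  have "frechet_derivative char_field (at 0) = char_lin"
    using char_lin_has_derivative frechet_derivative_at by metis
  moreover have "\<exists>d>0. ball 0 d \<subseteq> U \<and> (\<forall>x\<in>ball 0 d. \<forall>y\<in>ball 0 d.
      norm (char_field x - char_field y - frechet_derivative char_field (at 0) (x - y)) \<le> e * norm (x - y))"
    using char_field_has_derivative differentiable_def
    by (intro strict_derivative_estimate[OF U _ continuous_char_field_partials assms]) blast
  ultimately show ?thesis using that by metis
qed

lemma pd2_z_expand: "i \<in> Basis \<Longrightarrow> pd2 z (a, b) i 0 = a * pd2 z ex2 i 0 + b * pd2 z ey2 i 0"
  using linear_R2_expand[OF has_derivative_linear[OF pd_has_derivative[OF pd_z_differentiable[OF _ U(2)]]]]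
  by simp

lemma HJ_derivative_zero:
  assumes w: "w \<in> U"
  shows "frechet_derivative H (at (jet z w)) (Djet w v) = 0"
proof -
  have "((\<lambda>w. H (jet z w)) has_derivative (\<lambda>v. frechet_derivative H (at (jet z w)) (Djet w v))) (at w)"
    using has_derivative_compose[OF jet_has_derivative[OF w], of H] differentiable frechet_derivative_works
    by blast
  from has_derivative_transform_within_open[OF this U(1) w, of "\<lambda>w. 0"]
  have "((\<lambda>w. 0::real) has_derivative (\<lambda>v. frechet_derivative H (at (jet z w)) (Djet w v))) (at w)"
    using solves unfolding solves_HJ_def by blast
  from has_derivative_unique[OF this has_derivative_const] show ?thesis by metis
qed

lemma HJ_partial:
  assumes "w \<in> U"
  shows "fst j * pd H ex4 (jet z w) + snd j * pd H ey4 (jet z w)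
    + pd2 z j ex2 w * pd H ep4 (jet z w) + pd2 z j ey2 w * pd H eq4 (jet z w) = 0"
  using HJ_derivative_zero[OF assms, of j]
  by (simp add: Djet_def frechet_derivative_R4_expand[OF differentiable])

text \<open>The second derivatives of \<open>z\<close> need not be differentiable; they only occur multiplied by
  \<open>H\<^sub>p\<close> and \<open>H\<^sub>q\<close>, which vanish at the origin.\<close>
lemma HJ_second_partial:
  fixes v :: R2
  assumes j: "j \<in> Basis"
  defines "d \<equiv> Djet 0 v"
  shows "fst j * pd2 H d ex4 0 + snd j * pd2 H d ey4 0
    + pd2 z j ex2 0 * pd2 H d ep4 0 + pd2 z j ey2 0 * pd2 H d eq4 0 = 0"
proof -
  have comp: "((\<lambda>w. pd H i (jet z w)) has_derivative (\<lambda>v. pd2 H (Djet 0 v) i 0)) (at 0)" if "i \<in> Basis" for i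
    using has_derivative_compose[OF jet_has_derivative[OF U(2)] pd_has_derivative[OF pd_differentiable[OF that]]]
    by (simp add: jet_zero)
  have vanish: "pd H i (jet z 0) = 0" for i using critical by (simp add: jet_zero)
  have cont: "isCont (pd2 z j i) 0" if "i \<in> Basis" for i
    using continuous_pd2_z[OF that j] U continuous_on_eq_continuous_at by blast
  have B: "ex4 \<in> Basis" "ey4 \<in> Basis" "ep4 \<in> Basis" "eq4 \<in> Basis" "ex2 \<in> Basis" "ey2 \<in> Basis"
    by (simp_all add: Basis_R4 Basis_R2)
  have "((\<lambda>w. fst j * pd H ex4 (jet z w) + snd j * pd H ey4 (jet z w)
      + pd2 z j ex2 w * pd H ep4 (jet z w) + pd2 z j ey2 w * pd H eq4 (jet z w)) has_derivative
      (\<lambda>v. fst j * pd2 H (Djet 0 v) ex4 0 + snd j * pd2 H (Djet 0 v) ey4 0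
      + pd2 z j ex2 0 * pd2 H (Djet 0 v) ep4 0 + pd2 z j ey2 0 * pd2 H (Djet 0 v) eq4 0)) (at 0)"
    by (intro has_derivative_add has_derivative_mult_right comp B
        has_derivative_mult_vanishing[OF comp vanish cont])
  then have "((\<lambda>w. 0::real) has_derivative
      (\<lambda>v. fst j * pd2 H (Djet 0 v) ex4 0 + snd j * pd2 H (Djet 0 v) ey4 0
      + pd2 z j ex2 0 * pd2 H (Djet 0 v) ep4 0 + pd2 z j ey2 0 * pd2 H (Djet 0 v) eq4 0)) (at 0)"
    by (rule has_derivative_transform_within_open[OF _ U HJ_partial])
  from has_derivative_unique[OF this has_derivative_const] show ?thesis unfolding d_def by metis
qed

lemma tangent_plane_invariant: "Dxi 0 (Djet 0 v) = Djet 0 (char_lin v)"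
proof -
  have hx: "pd2 H (Djet 0 v) ex4 0 + pd2 z ex2 ex2 0 * pd2 H (Djet 0 v) ep4 0
      + pd2 z ex2 ey2 0 * pd2 H (Djet 0 v) eq4 0 = 0"
    using HJ_second_partial[of ex2] by (simp add: Basis_R2 ex2_def)
  have hy: "pd2 H (Djet 0 v) ey4 0 + pd2 z ey2 ex2 0 * pd2 H (Djet 0 v) ep4 0
      + pd2 z ey2 ey2 0 * pd2 H (Djet 0 v) eq4 0 = 0"
    using HJ_second_partial[of ey2] by (simp add: Basis_R2 ey2_def)
  show ?thesis
    using hx hy pd2_z_symmetric
    by (simp add: Dxi_def char_lin_def proj_def Djet_def pd2_z_expand Basis_R2 algebra_simps)
qed

lemma char_lin_left_eigendata:
  assumes ne: "e1 \<noteq> 0" "e2 \<noteq> 0" "e3 \<noteq> 0" "e4 \<noteq> 0"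
    and ev: "frechet_derivative (xiH H) (at 0) e1 = l1 *\<^sub>R e1" "frechet_derivative (xiH H) (at 0) e2 = l2 *\<^sub>R e2"
      "frechet_derivative (xiH H) (at 0) e3 = l3 *\<^sub>R e3" "frechet_derivative (xiH H) (at 0) e4 = l4 *\<^sub>R e4"
    and dist: "distinct [l1, l2, l3, l4]"
  obtains v1 v2 m1 m2 C where "left_eigendata char_lin v1 v2 m1 m2 C" "m1 \<in> {l1, l2, l3, l4}" "m2 \<in> {l1, l2, l3, l4}"
proof -
  have "Djet 0 w = 0 \<Longrightarrow> w = 0" for w using proj_Djet[of 0 w] by (auto simp: proj_def zero_prod_def)
  then obtain m1 m2 where "m2 < m1" "m1 \<in> {l1, l2, l3, l4}" "m2 \<in> {l1, l2, l3, l4}"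
      "charpoly2 char_lin m1 = 0" "charpoly2 char_lin m2 = 0"
    using invariant_plane_charpoly_roots[OF linear_Dxi linear_Djet linear_char_lin _ tangent_plane_invariant ne
        ev[unfolded frechet_derivative_xi] dist] by blast
  then show ?thesis using left_eigendata_exists[OF linear_char_lin] that by metis
qed

lemma expanding_cone:
  assumes eig: "left_eigendata char_lin v1 v2 m1 m2 C" and pos: "m1 > 0"
  obtains \<rho> where "\<rho> > 0" "cball 0 \<rho> \<subseteq> U"
    "\<And>q q'. forward_solution char_field (cball 0 \<rho>) q \<Longrightarrow> forward_solution char_field (cball 0 \<rho>) q' \<Longrightarrow>
       (v1 \<bullet> (q 0 - q' 0))\<^sup>2 \<le> (v2 \<bullet> (q 0 - q' 0))\<^sup>2"
proof -
  define c0 where "c0 = m1 - max m2 0"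
  define \<epsilon> where "\<epsilon> = c0 / (8 * (norm v1 + norm v2) * C)"
  have E: "v1 \<noteq> 0" "m2 < m1" "C > 0" using eig unfolding left_eigendata_def by blast+
  have c0: "c0 > 0" using E(2) pos by (simp add: c0_def)
  have "\<epsilon> > 0" using c0 E by (simp add: \<epsilon>_def add_pos_nonneg)
  then obtain d where d: "d > 0" "ball 0 d \<subseteq> U" and strict: "\<And>x y. x \<in> ball 0 d \<Longrightarrow> y \<in> ball 0 d \<Longrightarrow>
      norm (char_field x - char_field y - char_lin (x - y)) \<le> \<epsilon> * norm (x - y)"
    using char_field_strict_derivative by blast
  define \<rho> where "\<rho> = d / 2"
  have \<rho>: "\<rho> > 0" "cball 0 \<rho> \<subseteq> ball 0 d" using d by (auto simp: \<rho>_def)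
  have "(v1 \<bullet> (q 0 - q' 0))\<^sup>2 \<le> (v2 \<bullet> (q 0 - q' 0))\<^sup>2"
    if q: "forward_solution char_field (cball 0 \<rho>) q" and q': "forward_solution char_field (cball 0 \<rho>) q'" for q q'
  proof (rule ccontr)
    assume not_cone: "\<not> ?thesis"
    define \<Delta> where "\<Delta> t = q t - q' t" for t
    define G where "G t = (v1 \<bullet> \<Delta> t)\<^sup>2 - (v2 \<bullet> \<Delta> t)\<^sup>2" for t
    have inb: "q t \<in> ball 0 d" "q' t \<in> ball 0 d" if "t \<ge> 0" for t
      using q q' that \<rho>(2) unfolding forward_solution_def by blast+
    have n\<Delta>: "norm (\<Delta> t) \<le> 2 * \<rho>" if "t \<ge> 0" for t
    proof -
      have "norm (q t) \<le> \<rho>" "norm (q' t) \<le> \<rho>" using q q' that unfolding forward_solution_def by auto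
      then show ?thesis using norm_triangle_ineq4[of "q t" "q' t"] by (simp add: \<Delta>_def)
    qed
    have growth: "G T \<ge> G 0 + c0 * G 0 * T" if "T \<ge> 0" for T
    proof -
      have "(v1 \<bullet> \<Delta> T)\<^sup>2 - (v2 \<bullet> \<Delta> T)\<^sup>2 \<ge> ((v1 \<bullet> \<Delta> 0)\<^sup>2 - (v2 \<bullet> \<Delta> 0)\<^sup>2)
          + (m1 - max m2 0) * ((v1 \<bullet> \<Delta> 0)\<^sup>2 - (v2 \<bullet> \<Delta> 0)\<^sup>2) * T"
      proof (rule cone_difference_growth[where r="\<lambda>t. char_field (q t) - char_field (q' t) - char_lin (\<Delta> t)",
            OF eig pos _ _ _ _ that])
        show "continuous_on {0..} \<Delta>"
          using q q' unfolding \<Delta>_def[abs_def] forward_solution_def by (intro continuous_intros) auto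
        fix t :: real assume t: "t > 0"
        show "(\<Delta> has_vector_derivative char_lin (\<Delta> t) + (char_field (q t) - char_field (q' t) - char_lin (\<Delta> t))) (at t)"
          using q q' t unfolding \<Delta>_def[abs_def] forward_solution_def by (auto intro!: has_vector_derivative_diff)
        show "norm (char_field (q t) - char_field (q' t) - char_lin (\<Delta> t))
            \<le> (m1 - max m2 0) / (8 * (norm v1 + norm v2) * C) * norm (\<Delta> t)"
          using strict inb t unfolding \<epsilon>_def c0_def \<Delta>_def by simp
      qed (use not_cone in \<open>simp add: \<Delta>_def\<close>)
      then show ?thesis by (simp add: G_def c0_def)
    qed
    have bounded: "G t \<le> (norm v1 * (2 * \<rho>))\<^sup>2" if "t \<ge> 0" for t
    proof -
      have "\<bar>v1 \<bullet> \<Delta> t\<bar> \<le> norm v1 * (2 * \<rho>)"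
        using Cauchy_Schwarz_ineq2[of v1 "\<Delta> t"] n\<Delta>[OF that] by (meson mult_left_mono norm_ge_zero order_trans)
      then have "(v1 \<bullet> \<Delta> t)\<^sup>2 \<le> (norm v1 * (2 * \<rho>))\<^sup>2" by (metis abs_ge_zero power2_abs power_mono)
      moreover have "(v2 \<bullet> \<Delta> t)\<^sup>2 \<ge> 0" by simp
      ultimately show ?thesis unfolding G_def by linarith
    qed
    have G0: "G 0 > 0" using not_cone by (simp add: G_def \<Delta>_def)
    define T where "T = ((norm v1 * (2 * \<rho>))\<^sup>2 + 1) / (c0 * G 0)"
    have T: "T \<ge> 0" "c0 * G 0 * T = (norm v1 * (2 * \<rho>))\<^sup>2 + 1" using c0 G0 by (simp_all add: T_def)
    show False using growth[OF T(1)] bounded[OF T(1)] T(2) G0 by simp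
  qed
  then show ?thesis using that \<rho> d by blast
qed

lemma negligible_forward_stay_set:
  assumes eig: "left_eigendata char_lin v1 v2 m1 m2 C" and pos: "m1 > 0"
  obtains \<rho> where "\<rho> > 0" "cball 0 \<rho> \<subseteq> U"
    "negligible {x. \<exists>q. q 0 = x \<and> forward_solution char_field (cball 0 \<rho>) q}"
proof -
  obtain \<rho> where \<rho>: "\<rho> > 0" "cball 0 \<rho> \<subseteq> U"
    and cone: "\<And>q q'. forward_solution char_field (cball 0 \<rho>) q \<Longrightarrow> forward_solution char_field (cball 0 \<rho>) q' \<Longrightarrow>
       (v1 \<bullet> (q 0 - q' 0))\<^sup>2 \<le> (v2 \<bullet> (q 0 - q' 0))\<^sup>2"
    using expanding_cone[OF eig pos] by blast
  have C: "C > 0" "\<And>w. norm w \<le> C * (\<bar>v1 \<bullet> w\<bar> + \<bar>v2 \<bullet> w\<bar>)" using eig unfolding left_eigendata_def by blast+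
  have "negligible {x. \<exists>q. q 0 = x \<and> forward_solution char_field (cball 0 \<rho>) q}"
  proof (rule negligible_lipschitz_graph[where v=v2 and B="2 * C"])
    fix x y assume "x \<in> {x. \<exists>q. q 0 = x \<and> forward_solution char_field (cball 0 \<rho>) q}"
      "y \<in> {x. \<exists>q. q 0 = x \<and> forward_solution char_field (cball 0 \<rho>) q}"
    then have "(v1 \<bullet> (x - y))\<^sup>2 \<le> (v2 \<bullet> (x - y))\<^sup>2" using cone by blast
    then have "\<bar>v1 \<bullet> (x - y)\<bar> \<le> \<bar>v2 \<bullet> (x - y)\<bar>" using abs_le_square_iff by blast
    then have "\<bar>v1 \<bullet> (x - y)\<bar> + \<bar>v2 \<bullet> (x - y)\<bar> \<le> 2 * \<bar>v2 \<bullet> (x - y)\<bar>" by linarith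
    then have "norm (x - y) \<le> C * (2 * \<bar>v2 \<bullet> (x - y)\<bar>)"
      using order_trans[OF C(2)[of "x - y"] mult_left_mono] C(1) by simp
    then show "norm (x - y) \<le> 2 * C * \<bar>v2 \<bullet> x - v2 \<bullet> y\<bar>" by (simp add: inner_diff_right algebra_simps)
  qed
  then show ?thesis using that \<rho> by blast
qed

lemma jet_trajectory_projects:
  assumes c: "continuous_on {0..} \<Gamma>" and d: "\<And>t. t > 0 \<Longrightarrow> (\<Gamma> has_vector_derivative xiH H (\<Gamma> t)) (at t)"
    and on_jet: "\<And>t. t \<ge> 0 \<Longrightarrow> proj (\<Gamma> t) \<in> U \<and> \<Gamma> t = jet z (proj (\<Gamma> t))"
  shows "continuous_on {0..} (\<lambda>t. proj (\<Gamma> t))"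
    and "\<And>t. t > 0 \<Longrightarrow> ((\<lambda>t. proj (\<Gamma> t)) has_vector_derivative char_field (proj (\<Gamma> t))) (at t)"
proof -
  show "continuous_on {0..} (\<lambda>t. proj (\<Gamma> t))"
    by (rule continuous_on_compose2[OF linear_continuous_on[OF proj_bounded_linear] c]) auto
  fix t :: real assume "t > 0"
  then have "proj (xiH H (\<Gamma> t)) = char_field (proj (\<Gamma> t))"
    using on_jet[of t] by (simp add: char_field_def xi_base_def)
  then show "((\<lambda>t. proj (\<Gamma> t)) has_vector_derivative char_field (proj (\<Gamma> t))) (at t)"
    using bounded_linear.has_vector_derivative[OF proj_bounded_linear d[OF \<open>t > 0\<close>]] by simp
qed

lemma stable_jet_trajectories:
  assumes N: "open N" "0 \<in> N" "jet z ` U \<inter> N = stable_loc H N"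
  obtains \<rho> \<Gamma> where "\<rho> > 0" "ball 0 \<rho> \<subseteq> U" and "\<And>p. p \<in> ball 0 \<rho> \<Longrightarrow> \<Gamma> p 0 = jet z p"
    "\<And>p. p \<in> ball 0 \<rho> \<Longrightarrow> continuous_on {0..} (\<Gamma> p)"
    "\<And>p t. p \<in> ball 0 \<rho> \<Longrightarrow> t > 0 \<Longrightarrow> (\<Gamma> p has_vector_derivative xiH H (\<Gamma> p t)) (at t)"
    "\<And>p t. p \<in> ball 0 \<rho> \<Longrightarrow> t \<ge> 0 \<Longrightarrow> proj (\<Gamma> p t) \<in> U \<and> \<Gamma> p t = jet z (proj (\<Gamma> p t))"
    "\<And>p. p \<in> ball 0 \<rho> \<Longrightarrow> (\<Gamma> p \<longlongrightarrow> 0) at_top"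
proof -
  obtain e where e: "e > 0" "ball 0 e \<subseteq> N" using N open_contains_ball by blast
  have "isCont (jet z) 0" using jet_has_derivative[OF U(2)] has_derivative_continuous by blast
  then obtain d where d: "d > 0" "\<And>p. dist p 0 < d \<Longrightarrow> dist (jet z p) (jet z 0) < e"
    using e(1) unfolding continuous_at_eps_delta by blast
  obtain d0 where d0: "d0 > 0" "ball 0 d0 \<subseteq> U" using U open_contains_ball by blast
  define \<rho> where "\<rho> = min d d0"
  have inN: "jet z p \<in> stable_loc H N" if "p \<in> ball 0 \<rho>" for p
  proof -
    have "jet z p \<in> ball 0 e" using d(2)[of p] that jet_zero by (simp add: \<rho>_def dist_commute)
    moreover have "p \<in> U" using that d0 by (auto simp: \<rho>_def)
    ultimately show ?thesis using N(3) e(2) by blast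
  qed
  define traj where "traj P \<gamma> \<longleftrightarrow> \<gamma> 0 = P \<and> (\<forall>t\<ge>0. (\<gamma> has_vector_derivative xiH H (\<gamma> t)) (at t within {0..})
      \<and> \<gamma> t \<in> N) \<and> (\<gamma> \<longlongrightarrow> 0) at_top" for P \<gamma>
  define \<Gamma> where "\<Gamma> p = (SOME \<gamma>. traj (jet z p) \<gamma>)" for p
  have \<Gamma>: "traj (jet z p) (\<Gamma> p)" if "p \<in> ball 0 \<rho>" for p
  proof -
    have "\<exists>\<gamma>. traj (jet z p) \<gamma>" using inN[OF that] unfolding stable_loc_def traj_def by blast
    then show ?thesis unfolding \<Gamma>_def by (rule someI_ex)
  qed
  show ?thesis
  proof (rule that[of \<rho> \<Gamma>])
    fix p :: R2 assume p: "p \<in> ball 0 \<rho>"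
    note \<gamma> = \<Gamma>[OF p, unfolded traj_def]
    show "continuous_on {0..} (\<Gamma> p)"
      using \<gamma> has_vector_derivative_continuous continuous_on_eq_continuous_within by (metis atLeast_iff)
    show "(\<Gamma> p has_vector_derivative xiH H (\<Gamma> p t)) (at t)" if "t > 0" for t
    proof -
      have "t \<in> interior {0::real..}" using that by simp
      then show ?thesis using \<gamma> that at_within_interior by (metis less_imp_le)
    qed
    show "proj (\<Gamma> p t) \<in> U \<and> \<Gamma> p t = jet z (proj (\<Gamma> p t))" if "t \<ge> 0" for t
    proof -
      have "\<Gamma> p t \<in> jet z ` U" using stable_loc_shift[of "\<Gamma> p" H N t] \<gamma> that N(3) by blast
      then show ?thesis by (auto simp: proj_jet)
    qed
  qed (use \<Gamma> d d0 in \<open>auto simp: traj_def \<rho>_def\<close>)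
qed

text \<open>Otherwise the points whose projected trajectories stay near the origin form a null set, while
  every point near the origin enters such a trajectory after some integer time \<open>n\<close>, and the time-\<open>n\<close>
  flow has a Lipschitz inverse on bounded sets.\<close>
lemma stable_char_lin_nonpositive:
  assumes eig: "left_eigendata char_lin v1 v2 m1 m2 C"
    and stable: "open N" "0 \<in> N" "jet z ` U \<inter> N = stable_loc H N"
  shows "m1 \<le> 0"
proof (rule ccontr)
  assume "\<not> m1 \<le> 0"
  then have pos: "m1 > 0" by simp
  obtain \<rho>1 where \<rho>1: "\<rho>1 > 0" "cball 0 \<rho>1 \<subseteq> U"
    and negG: "negligible {x. \<exists>q. q 0 = x \<and> forward_solution char_field (cball 0 \<rho>1) q}"
    by (rule negligible_forward_stay_set[OF eig pos])
  obtain \<rho> \<Gamma> where \<rho>: "\<rho> > 0" "ball 0 \<rho> \<subseteq> U"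
    and \<Gamma>0: "\<And>p. p \<in> ball 0 \<rho> \<Longrightarrow> \<Gamma> p 0 = jet z p"
    and \<Gamma>c: "\<And>p. p \<in> ball 0 \<rho> \<Longrightarrow> continuous_on {0..} (\<Gamma> p)"
    and \<Gamma>d: "\<And>p t. p \<in> ball 0 \<rho> \<Longrightarrow> t > 0 \<Longrightarrow> (\<Gamma> p has_vector_derivative xiH H (\<Gamma> p t)) (at t)"
    and \<Gamma>jet: "\<And>p t. p \<in> ball 0 \<rho> \<Longrightarrow> t \<ge> 0 \<Longrightarrow> proj (\<Gamma> p t) \<in> U \<and> \<Gamma> p t = jet z (proj (\<Gamma> p t))"
    and \<Gamma>lim: "\<And>p. p \<in> ball 0 \<rho> \<Longrightarrow> (\<Gamma> p \<longlongrightarrow> 0) at_top"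
    using stable_jet_trajectories[OF stable] by blast
  define w where "w p t = proj (\<Gamma> p t)" for p t
  have wc: "continuous_on {0..} (w p)"
    and wd: "\<And>t. t > 0 \<Longrightarrow> (w p has_vector_derivative char_field (w p t)) (at t)" if p: "p \<in> ball 0 \<rho>" for p
    using jet_trajectory_projects[OF \<Gamma>c[OF p] \<Gamma>d[OF p] \<Gamma>jet[OF p]] unfolding w_def by blast+
  obtain LJ where LJ: "\<And>x y. x \<in> cball 0 \<rho>1 \<Longrightarrow> y \<in> cball 0 \<rho>1 \<Longrightarrow> norm (jet z x - jet z y) \<le> LJ * norm (x - y)"
    using continuous_partials_imp_lipschitz_cball[OF U(1) \<rho>1(2) jet_differentiable continuous_jet_partials] by blast
  define E where "E n R = {p \<in> ball 0 \<rho>. (\<forall>t\<ge>0. norm (\<Gamma> p t) \<le> real R) \<and> (\<forall>t\<ge>real n. w p t \<in> cball 0 \<rho>1)}"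
    for n R :: nat
  have "negligible (E n R)" for n R
  proof -
    obtain B where B: "B \<ge> 0" "\<And>x y. x \<in> cball 0 (real R) \<Longrightarrow> y \<in> cball 0 (real R) \<Longrightarrow>
        norm (xiH H x - xiH H y) \<le> B * norm (x - y)"
      using continuous_partials_imp_lipschitz_cball[OF open_UNIV subset_UNIV xi_differentiable continuous_xi_partials]
      by blast
    have "forward_solution char_field (cball 0 \<rho>1) (\<lambda>t. w p (real n + t))" if p: "p \<in> E n R" for p
    proof -
      have pb: "p \<in> ball 0 \<rho>" using p by (simp add: E_def)
      show ?thesis using forward_solution_shift[OF wc[OF pb] wd[OF pb], of "real n"] p by (simp add: E_def)
    qed
    then have "(\<lambda>p. w p (real n)) ` E n R \<subseteq> {x. \<exists>q. q 0 = x \<and> forward_solution char_field (cball 0 \<rho>1) q}"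
      by (auto intro!: exI[of _ "\<lambda>t. w _ (real n + t)"])
    then have null: "negligible ((\<lambda>p. proj (\<Gamma> p (real n))) ` E n R)"
      unfolding w_def by (rule negligible_subset[OF negG])
    show ?thesis
    proof (rule negligible_if_time_map_null[where \<Gamma>=\<Gamma> and T="real n" and E="E n R" and R="real R"
          and X="xiH H" and J="jet z" and S="cball 0 \<rho>1", OF _ _ _ _ B(2) B(1) _ LJ null])
      fix p assume p: "p \<in> E n R"
      then have pb: "p \<in> ball 0 \<rho>" by (simp add: E_def)
      show "continuous_on {0..} (\<Gamma> p)" by (rule \<Gamma>c[OF pb])
      show "(\<Gamma> p has_vector_derivative xiH H (\<Gamma> p t)) (at t)" if "t > 0" for t by (rule \<Gamma>d[OF pb that])
      show "proj (\<Gamma> p 0) = p" using \<Gamma>0[OF pb] by (simp add: proj_jet)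
      show "norm (\<Gamma> p t) \<le> real R" if "t \<ge> 0" for t using p that by (simp add: E_def)
      show "\<Gamma> p (real n) = jet z (proj (\<Gamma> p (real n))) \<and> proj (\<Gamma> p (real n)) \<in> cball 0 \<rho>1"
        using \<Gamma>jet[OF pb, of "real n"] p by (simp add: E_def w_def)
    qed auto
  qed
  then have "negligible (\<Union>n R. E n R)" by (intro negligible_countable_Union) auto
  moreover have "ball 0 \<rho> \<subseteq> (\<Union>n R. E n R)"
  proof
    fix p :: R2 assume p: "p \<in> ball 0 \<rho>"
    obtain n R :: nat where nR: "\<And>t. t \<ge> 0 \<Longrightarrow> norm (\<Gamma> p t) \<le> real R"
        "\<And>t. t \<ge> real n \<Longrightarrow> norm (\<Gamma> p t) < \<rho>1"
      using convergent_path_bounded[OF \<Gamma>c[OF p] \<Gamma>lim[OF p] \<rho>1(1)] by metis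
    have "w p t \<in> cball 0 \<rho>1" if "t \<ge> real n" for t
      using norm_proj_le[of "\<Gamma> p t"] nR(2)[OF that] by (simp add: w_def)
    then have "p \<in> E n R" using p nR(1) by (simp add: E_def)
    then show "p \<in> (\<Union>n R. E n R)" by blast
  qed
  ultimately show False
    using negligible_subset open_not_negligible[of "ball (0::R2) \<rho>"] \<rho>(1) by auto
qed

end

section \<open>Comparison of two solutions\<close>

locale hj_solution_pair = z: hj_solution H z U + zt: hj_solution H zt Ut for H z U zt Ut +
  assumes tangent: "pd2 zt ex2 ex2 0 = pd2 z ex2 ex2 0" "pd2 zt ex2 ey2 0 = pd2 z ex2 ey2 0"
      "pd2 zt ey2 ey2 0 = pd2 z ey2 ey2 0"
    and vanish: "z 0 = 0" "zt 0 = 0"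
begin

lemma Djet_eq: "zt.Djet 0 = z.Djet 0"
proof
  fix v :: R2
  obtain a b where v: "v = (a, b)" by fastforce
  show "zt.Djet 0 v = z.Djet 0 v"
    using tangent z.pd2_z_symmetric zt.pd2_z_symmetric
    by (simp add: v z.Djet_def zt.Djet_def z.pd2_z_expand zt.pd2_z_expand Basis_R2)
qed

lemma char_lin_eq: "zt.char_lin = z.char_lin"
  by (simp add: z.char_lin_def[abs_def] zt.char_lin_def[abs_def] Djet_eq)

definition grad_diff :: "R2 \<Rightarrow> R2" where
  "grad_diff w = (pd zt ex2 w - pd z ex2 w, pd zt ey2 w - pd z ey2 w)"

lemma diff_has_derivative:
  assumes w: "w \<in> U \<inter> Ut"
  shows "((\<lambda>w. zt w - z w) has_derivative (\<lambda>h. grad_diff w \<bullet> h)) (at w)"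
proof -
  have "(zt has_derivative frechet_derivative zt (at w)) (at w)" "(z has_derivative frechet_derivative z (at w)) (at w)"
    using zt.z_differentiable[of w] z.z_differentiable[of w] w frechet_derivative_works by blast+
  note d = this has_derivative_linear[OF this(1)] has_derivative_linear[OF this(2)]
  have "frechet_derivative zt (at w) h - frechet_derivative z (at w) h = grad_diff w \<bullet> h" for h
    by (cases h) (simp add: linear_R2_expand[OF d(3)] linear_R2_expand[OF d(4)] grad_diff_def pd_def
        inner_prod_def algebra_simps)
  then show ?thesis using has_derivative_diff[OF d(1,2)] by simp
qed

lemma grad_diff_small:
  assumes e: "e > 0"
  obtains d where "d > 0" "\<And>w. norm w < d \<Longrightarrow> norm (grad_diff w) \<le> e * norm w"
proof -
  have dzt: "(pd zt i has_derivative (\<lambda>v. pd2 z v i 0)) (at 0)" if "i \<in> {ex2, ey2}" for i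
  proof -
    have "pd2 zt v i 0 = pd2 z v i 0" for v using fun_cong[OF Djet_eq, of v] that by (auto simp: z.Djet_def zt.Djet_def)
    then show ?thesis using pd_has_derivative[OF zt.pd_z_differentiable[OF _ zt.U(2)], of i] that
      by (simp add: Basis_R2)
  qed
  have dz: "(pd z i has_derivative (\<lambda>v. pd2 z v i 0)) (at 0)" if "i \<in> {ex2, ey2}" for i
    using pd_has_derivative[OF z.pd_z_differentiable[OF _ z.U(2)], of i] that by (simp add: Basis_R2)
  have "((\<lambda>w. pd zt i w - pd z i w) has_derivative (\<lambda>v. 0)) (at 0)" if "i \<in> {ex2, ey2}" for i
    using has_derivative_diff[OF dzt[OF that] dz[OF that]] by simp
  then have "(grad_diff has_derivative (\<lambda>v. (0, 0))) (at 0)"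
    unfolding grad_diff_def[abs_def] by (intro has_derivative_Pair) auto
  then have "\<exists>d>0. \<forall>y. norm (y - 0) < d \<longrightarrow> norm (grad_diff y - grad_diff 0 - 0) \<le> e * norm (y - 0)"
    using e unfolding has_derivative_at_alt zero_prod_def by blast
  moreover have "grad_diff 0 = 0" using z.grad_zero zt.grad_zero by (simp add: grad_diff_def zero_prod_def)
  ultimately show ?thesis using that by (metis diff_zero)
qed

lemma diff_small:
  assumes e: "e > 0"
  shows "\<exists>d>0. ball 0 d \<subseteq> U \<inter> Ut \<and> (\<forall>w\<in>ball 0 d. \<bar>zt w - z w\<bar> \<le> e * (norm w)\<^sup>2)"
proof -
  obtain d1 where d1: "d1 > 0" "\<And>w. norm w < d1 \<Longrightarrow> norm (grad_diff w) \<le> e * norm w"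
    using grad_diff_small[OF e] by blast
  obtain d0 where d0: "d0 > 0" "ball 0 d0 \<subseteq> U \<inter> Ut"
    using open_Int[OF z.U(1) zt.U(1)] z.U(2) zt.U(2) open_contains_ball by blast
  define d where "d = min d0 d1"
  have "\<bar>zt w - z w\<bar> \<le> e * (norm w)\<^sup>2" if w: "w \<in> ball 0 d" for w
  proof -
    have sub: "cball 0 (norm w) \<subseteq> ball 0 d" using w by auto
    have "norm ((zt w - z w) - (zt 0 - z 0)) \<le> (e * norm w) * norm (w - 0)"
    proof (rule differentiable_bound[where S="cball 0 (norm w)"])
      show "((\<lambda>w. zt w - z w) has_derivative (\<lambda>h. grad_diff x \<bullet> h)) (at x within cball 0 (norm w))"
        if "x \<in> cball 0 (norm w)" for x
      proof -
        have "x \<in> ball 0 (min d0 d1)" using sub that unfolding d_def by blast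
        then have "x \<in> U \<inter> Ut" using d0(2) by auto
        then show ?thesis using diff_has_derivative has_derivative_at_withinI by blast
      qed
      show "onorm (\<lambda>h. grad_diff x \<bullet> h) \<le> e * norm w" if x: "x \<in> cball 0 (norm w)" for x
      proof (rule onorm_le)
        fix h :: R2
        have "norm (grad_diff x) \<le> e * norm w"
          using d1(2)[of x] x w e by (auto simp: d_def intro: order_trans mult_left_mono)
        then show "norm (grad_diff x \<bullet> h) \<le> e * norm w * norm h"
          using Cauchy_Schwarz_ineq2[of "grad_diff x" h] by (simp add: mult_right_mono order_trans)
      qed
    qed (use w in auto)
    then show ?thesis using vanish by (simp add: power2_eq_square mult.assoc)
  qed
  moreover have "d > 0" "ball 0 d \<subseteq> U \<inter> Ut" using d0 d1 by (auto simp: d_def)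
  ultimately show ?thesis by blast
qed

lemma HJ_difference:
  assumes w: "w \<in> U \<inter> Ut"
  obtains \<theta> where "0 \<le> \<theta>" "\<theta> \<le> 1" "z.xi_base (jet z w + \<theta> *\<^sub>R (jet zt w - jet z w)) \<bullet> grad_diff w = 0"
proof -
  define P0 where "P0 = jet z w"
  define P1 where "P1 = jet zt w"
  have "H P0 = 0" "H P1 = 0"
    using z.solves zt.solves w unfolding solves_HJ_def P0_def P1_def by auto
  moreover have "\<exists>\<theta>. 0 < \<theta> \<and> \<theta> < 1 \<and> H (P0 + 1 *\<^sub>R (P1 - P0)) - H (P0 + 0 *\<^sub>R (P1 - P0)) =
      (1 - 0) * frechet_derivative H (at (P0 + \<theta> *\<^sub>R (P1 - P0))) (P1 - P0)"
  proof (rule MVT2[where f="\<lambda>s. H (P0 + s *\<^sub>R (P1 - P0))"])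
    fix s :: real
    show "((\<lambda>s. H (P0 + s *\<^sub>R (P1 - P0))) has_real_derivative
        frechet_derivative H (at (P0 + s *\<^sub>R (P1 - P0))) (P1 - P0)) (at s)"
      by (rule has_real_derivative_along_line) (use z.differentiable frechet_derivative_works in blast)
  qed simp
  ultimately obtain \<theta> where \<theta>: "0 < \<theta>" "\<theta> < 1"
    "frechet_derivative H (at (P0 + \<theta> *\<^sub>R (P1 - P0))) (P1 - P0) = 0"
    by auto
  define Q where "Q = P0 + \<theta> *\<^sub>R (P1 - P0)"
  have "P1 - P0 = (0, 0, fst (grad_diff w), snd (grad_diff w))"
    by (simp add: P0_def P1_def jet_def grad_diff_def)
  with \<theta>(3) have "frechet_derivative H (at Q) (0, 0, fst (grad_diff w), snd (grad_diff w)) = 0"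
    unfolding Q_def[symmetric] by simp
  then have "z.xi_base Q \<bullet> grad_diff w = 0" unfolding z.frechet_derivative_H_vertical by simp
  then show ?thesis using \<theta>(1,2) unfolding Q_def P0_def P1_def by (intro that[of \<theta>]) auto
qed

lemma xi_base_between_jets:
  assumes e: "e > 0"
  obtains d where "d > 0" "\<And>w \<theta>. norm w < d \<Longrightarrow> \<theta> \<in> {0..1} \<Longrightarrow>
    norm (z.xi_base (jet z w + \<theta> *\<^sub>R (jet zt w - jet z w)) - z.char_lin w) \<le> e * norm w"
proof -
  have T: "bounded_linear (z.Djet 0)" using z.jet_has_derivative[OF z.U(2)] has_derivative_bounded_linear by blast
  obtain \<delta> d1 where \<delta>: "\<delta> > 0" "d1 > 0"
    and approx: "\<And>w y. norm w < d1 \<Longrightarrow> norm (y - z.Djet 0 w) \<le> \<delta> * norm w \<Longrightarrow>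
        norm (z.xi_base y - proj (z.Dxi 0 (z.Djet 0 w))) \<le> e * norm w"
    using has_derivative_near_linear_input[OF z.xi_base_has_derivative z.xi_base_zero T e] by blast
  have "\<exists>d>0. \<forall>w. norm w < d \<longrightarrow> norm (jet f w - z.Djet 0 w) \<le> \<delta> * norm w"
    if "(jet f has_derivative z.Djet 0) (at 0)" "jet f 0 = 0" for f
    using that \<delta>(1) unfolding has_derivative_at_alt by (metis diff_zero)
  from this[OF z.jet_has_derivative[OF z.U(2)] z.jet_zero] this[OF _ zt.jet_zero]
  obtain d2 d3 where d2: "d2 > 0" "\<And>w. norm w < d2 \<Longrightarrow> norm (jet z w - z.Djet 0 w) \<le> \<delta> * norm w"
    and d3: "d3 > 0" "\<And>w. norm w < d3 \<Longrightarrow> norm (jet zt w - z.Djet 0 w) \<le> \<delta> * norm w"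
    using zt.jet_has_derivative[OF zt.U(2)] Djet_eq by auto
  have "norm (z.xi_base (jet z w + \<theta> *\<^sub>R (jet zt w - jet z w)) - z.char_lin w) \<le> e * norm w"
    if w: "norm w < min d1 (min d2 d3)" and \<theta>: "\<theta> \<in> {0..1}" for w \<theta>
  proof (rule approx[unfolded z.char_lin_def[symmetric]])
    have "jet z w + \<theta> *\<^sub>R (jet zt w - jet z w) - z.Djet 0 w
        = (1 - \<theta>) *\<^sub>R (jet z w - z.Djet 0 w) + \<theta> *\<^sub>R (jet zt w - z.Djet 0 w)"
      by (simp add: algebra_simps)
    also have "norm \<dots> \<le> (1 - \<theta>) * (\<delta> * norm w) + \<theta> * (\<delta> * norm w)"
      using d2(2)[of w] d3(2)[of w] w \<theta>
      by (intro norm_triangle_le add_mono) (auto intro: mult_left_mono)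
    finally show "norm (jet z w + \<theta> *\<^sub>R (jet zt w - jet z w) - z.Djet 0 w) \<le> \<delta> * norm w"
      by (simp add: algebra_simps)
  qed (use w in simp)
  then show ?thesis using that \<delta> d2 d3 by (metis min_less_iff_conj)
qed

text \<open>The direction is the projected characteristic direction at the intermediate point of
  \<open>HJ_difference\<close>, which is \<open>char_lin w + o(|w|)\<close>.\<close>
lemma descent_direction:
  assumes eig: "left_eigendata z.char_lin v1 v2 m1 m2 C" and neg: "m1 < 0"
  obtains d where "d > 0" "\<And>w. w \<in> U \<inter> Ut \<Longrightarrow> w \<noteq> 0 \<Longrightarrow> norm w < d \<Longrightarrow>
    \<exists>a. grad_diff w \<bullet> a = 0 \<and> 2 * (v1 \<bullet> w) * (v1 \<bullet> a) + 2 * (v2 \<bullet> w) * (v2 \<bullet> a) < 0"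
proof -
  define M where "M = norm v1 + norm v2"
  have E: "v1 \<noteq> 0" "m2 < m1" "\<And>w. v1 \<bullet> z.char_lin w = m1 * (v1 \<bullet> w)"
    "\<And>w. v2 \<bullet> z.char_lin w = m2 * (v2 \<bullet> w)" "C > 0"
    using eig unfolding left_eigendata_def by blast+
  have M: "M > 0" using E(1) by (simp add: M_def add_pos_nonneg)
  define \<epsilon> where "\<epsilon> = - m1 / (4 * M * C)"
  have \<epsilon>: "\<epsilon> > 0" "2 * M * C * \<epsilon> = - m1 / 2" using neg M E(5) by (auto simp: \<epsilon>_def divide_neg_pos)
  obtain d where d: "d > 0" and approx: "\<And>w \<theta>. norm w < d \<Longrightarrow> \<theta> \<in> {0..1} \<Longrightarrow>
      norm (z.xi_base (jet z w + \<theta> *\<^sub>R (jet zt w - jet z w)) - z.char_lin w) \<le> \<epsilon> * norm w"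
    using xi_base_between_jets[OF \<epsilon>(1)] by blast
  have "\<exists>a. grad_diff w \<bullet> a = 0 \<and> 2 * (v1 \<bullet> w) * (v1 \<bullet> a) + 2 * (v2 \<bullet> w) * (v2 \<bullet> a) < 0"
    if w: "w \<in> U \<inter> Ut" "w \<noteq> 0" "norm w < d" for w
  proof -
    obtain \<theta> where \<theta>: "0 \<le> \<theta>" "\<theta> \<le> 1"
      and orth: "z.xi_base (jet z w + \<theta> *\<^sub>R (jet zt w - jet z w)) \<bullet> grad_diff w = 0"
      using HJ_difference[OF w(1)] by blast
    define a where "a = z.xi_base (jet z w + \<theta> *\<^sub>R (jet zt w - jet z w))"
    define r where "r = a - z.char_lin w"
    define u1 where "u1 = v1 \<bullet> w"
    define u2 where "u2 = v2 \<bullet> w"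
    have r: "norm r \<le> \<epsilon> * norm w" using approx[OF w(3)] \<theta> by (simp add: r_def a_def)
    have a: "v1 \<bullet> a = m1 * u1 + v1 \<bullet> r" "v2 \<bullet> a = m2 * u2 + v2 \<bullet> r"
      by (simp_all add: r_def E u1_def u2_def inner_diff_right)
    have err: "\<bar>u1 * (v1 \<bullet> r)\<bar> + \<bar>u2 * (v2 \<bullet> r)\<bar> \<le> - m1 / 2 * (u1\<^sup>2 + u2\<^sup>2)"
      using left_eigendata_perturbation[OF eig r] \<epsilon> by (simp add: u1_def u2_def M_def)
    have "m2 * u2\<^sup>2 \<le> m1 * u2\<^sup>2" using E(2) by (simp add: mult_right_mono)
    moreover have pos: "u1\<^sup>2 + u2\<^sup>2 > 0"
      using left_eigendata_coords_nonzero[OF eig w(2)] by (simp add: u1_def u2_def)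
    ultimately have "2 * u1 * (v1 \<bullet> a) + 2 * u2 * (v2 \<bullet> a) \<le> m1 * (u1\<^sup>2 + u2\<^sup>2)"
      using err unfolding a by (simp add: power2_eq_square algebra_simps abs_le_iff)
    also have "\<dots> < 0" using neg pos by (simp add: mult_neg_pos)
    finally have "2 * (v1 \<bullet> w) * (v1 \<bullet> a) + 2 * (v2 \<bullet> w) * (v2 \<bullet> a) < 0"
      by (simp add: u1_def u2_def)
    moreover have "grad_diff w \<bullet> a = 0" using orth by (simp add: a_def inner_commute)
    ultimately show ?thesis by blast
  qed
  then show ?thesis using that d by blast
qed

lemma comparison:
  assumes eig: "left_eigendata z.char_lin v1 v2 m1 m2 C" and neg: "m1 < 0"
  obtains d where "d > 0" "ball 0 d \<subseteq> U \<inter> Ut" "\<And>w. w \<in> ball 0 d \<Longrightarrow> zt w \<le> z w"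
proof -
  define V where "V w = (v1 \<bullet> w)\<^sup>2 + (v2 \<bullet> w)\<^sup>2" for w
  have C: "C > 0" using eig unfolding left_eigendata_def by blast
  have Vpos: "V w > 0" if "w \<noteq> 0" for w
    using left_eigendata_coords_nonzero[OF eig that] by (simp add: V_def)
  have V_has_derivative: "(V has_derivative (\<lambda>h. 2 * (v1 \<bullet> w) * (v1 \<bullet> h) + 2 * (v2 \<bullet> w) * (v2 \<bullet> h))) (at w)" for w
    unfolding V_def[abs_def] by (auto intro!: derivative_eq_intros simp: power2_eq_square algebra_simps)
  have contV: "continuous_on UNIV V" unfolding V_def[abs_def] by (intro continuous_intros)
  obtain da where da: "da > 0" and descent: "\<And>w. w \<in> U \<inter> Ut \<Longrightarrow> w \<noteq> 0 \<Longrightarrow> norm w < da \<Longrightarrow>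
      \<exists>a. grad_diff w \<bullet> a = 0 \<and> 2 * (v1 \<bullet> w) * (v1 \<bullet> a) + 2 * (v2 \<bullet> w) * (v2 \<bullet> a) < 0"
    using descent_direction[OF eig neg] by blast
  obtain d0 where d0: "d0 > 0" "ball 0 d0 \<subseteq> U \<inter> Ut"
    using open_Int[OF z.U(1) zt.U(1)] z.U(2) zt.U(2) open_contains_ball by blast
  define r where "r = (min da d0)\<^sup>2 / (4 * C\<^sup>2)"
  have r: "r > 0" using da d0 C by (simp add: r_def)
  have compact: "compact {w. V w \<le> r}" and small: "\<And>w. V w \<le> r \<Longrightarrow> norm w < min da d0"
    using left_eigendata_sublevel[OF eig, of "min da d0"] da d0 unfolding V_def r_def by auto
  have inU: "w \<in> U \<inter> Ut" if "V w \<le> r" for w using small[OF that] d0(2) by auto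
  have "zt w - z w \<le> 0" if w: "V w \<le> r" for w
  proof (rule sublevel_maximum_principle[OF compact _ _ _ _ w])
    have "V 0 \<le> r" using r by (simp add: V_def)
    then show "{w. V w \<le> r} \<noteq> {}" by blast
    have "isCont (\<lambda>w. (zt w - z w) / V w) w" if "V w \<le> r" for w
    proof (cases "w = 0")
      case True
      have "\<exists>d>0. \<forall>x. norm x < d \<longrightarrow> \<bar>zt x - z x\<bar> \<le> e * (norm x)\<^sup>2" if "e > 0" for e
        using diff_small[OF that] by (metis mem_ball_0)
      moreover have "(norm x)\<^sup>2 \<le> 2 * C\<^sup>2 * V x" for x
        using left_eigendata_norm_squared_le[OF eig] by (simp add: V_def)
      ultimately have "isCont (\<lambda>x. (zt x - z x) / V x) 0"
        by (rule isCont_quotient_at_zero) (use C in auto)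
      then show ?thesis using True by simp
    next
      case False
      have "isCont (\<lambda>w. zt w - z w) w"
        using diff_has_derivative[OF inU[OF that]] has_derivative_continuous by blast
      moreover have "isCont V w" using contV continuous_on_eq_continuous_at[OF open_UNIV] by blast
      ultimately show ?thesis using Vpos[OF False] by (intro isCont_divide) auto
    qed
    then show "continuous_on {w. V w \<le> r} (\<lambda>w. (zt w - z w) / V w)"
      by (intro continuous_at_imp_continuous_on) auto
    show "V w > 0" if "zt w - z w \<noteq> 0" for w
      using Vpos[of w] vanish that by (cases "w = 0") auto
    fix w assume "V w \<le> r" "zt w - z w > 0"
    then have "w \<noteq> 0" "norm w < da" using vanish small by auto
    then obtain a where "grad_diff w \<bullet> a = 0" "2 * (v1 \<bullet> w) * (v1 \<bullet> a) + 2 * (v2 \<bullet> w) * (v2 \<bullet> a) < 0"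
      using descent inU \<open>V w \<le> r\<close> by blast
    then show "\<exists>u' V' a. ((\<lambda>w. zt w - z w) has_derivative u') (at w) \<and> (V has_derivative V') (at w) \<and> u' a = 0 \<and> V' a < 0"
      using diff_has_derivative[OF inU[OF \<open>V w \<le> r\<close>]] V_has_derivative by blast
  qed
  moreover have "open {w. V w < r}" "0 \<in> {w. V w < r}"
    using open_Collect_less[OF contV continuous_on_const] r by (simp_all add: V_def)
  then obtain \<rho> where "\<rho> > 0" "ball 0 \<rho> \<subseteq> {w. V w < r}"
    using open_contains_ball by blast
  ultimately show ?thesis using that[of \<rho>] inU by force
qed

lemma eq_near_origin_if_stable:
  assumes ne: "e1 \<noteq> 0" "e2 \<noteq> 0" "e3 \<noteq> 0" "e4 \<noteq> 0"
    and ev: "frechet_derivative (xiH H) (at 0) e1 = l1 *\<^sub>R e1" "frechet_derivative (xiH H) (at 0) e2 = l2 *\<^sub>R e2"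
      "frechet_derivative (xiH H) (at 0) e3 = l3 *\<^sub>R e3" "frechet_derivative (xiH H) (at 0) e4 = l4 *\<^sub>R e4"
    and dist: "distinct [l1, l2, l3, l4]" and nz: "0 \<notin> {l1, l2, l3, l4}"
    and stable: "open N" "0 \<in> N" "jet z ` U \<inter> N = stable_loc H N"
  shows "\<exists>W. open W \<and> 0 \<in> W \<and> W \<subseteq> U \<inter> Ut \<and> (\<forall>w\<in>W. zt w = z w)"
proof -
  obtain v1 v2 m1 m2 C where eig: "left_eigendata z.char_lin v1 v2 m1 m2 C" and m1: "m1 \<in> {l1, l2, l3, l4}"
    and "m2 \<in> {l1, l2, l3, l4}"
    by (rule z.char_lin_left_eigendata[OF ne ev dist])
  have neg: "m1 < 0" using z.stable_char_lin_nonpositive[OF eig stable] m1 nz by (cases "m1 = 0") auto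
  obtain d1 where d1: "d1 > 0" "ball 0 d1 \<subseteq> U \<inter> Ut" "\<And>w. w \<in> ball 0 d1 \<Longrightarrow> zt w \<le> z w"
    using comparison[OF eig neg] by blast
  interpret swapped: hj_solution_pair H zt Ut z U
    using tangent vanish by unfold_locales auto
  have "left_eigendata zt.char_lin v1 v2 m1 m2 C" using eig char_lin_eq by simp
  then obtain d2 where d2: "d2 > 0" "ball 0 d2 \<subseteq> Ut \<inter> U" "\<And>w. w \<in> ball 0 d2 \<Longrightarrow> z w \<le> zt w"
    using swapped.comparison[OF _ neg] by blast
  show ?thesis using d1 d2 by (intro exI[of _ "ball 0 (min d1 d2)"]) (auto intro: order.antisym)
qed

end

lemma uniqueness_if_stable:
  fixes H :: "R4 \<Rightarrow> real" and z zt :: "R2 \<Rightarrow> real"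
  assumes H: "Ck_on 2 UNIV H" "\<And>v. pd H v 0 = 0"
    and ne: "e1 \<noteq> 0" "e2 \<noteq> 0" "e3 \<noteq> 0" "e4 \<noteq> 0"
    and ev: "frechet_derivative (xiH H) (at 0) e1 = l1 *\<^sub>R e1" "frechet_derivative (xiH H) (at 0) e2 = l2 *\<^sub>R e2"
      "frechet_derivative (xiH H) (at 0) e3 = l3 *\<^sub>R e3" "frechet_derivative (xiH H) (at 0) e4 = l4 *\<^sub>R e4"
    and dist: "distinct [l1, l2, l3, l4]" and nz: "0 \<notin> {l1, l2, l3, l4}"
    and z: "open U" "0 \<in> U" "Ck_on 2 U z" "solves_HJ H U z" "z 0 = 0" "pd z ex2 0 = 0" "pd z ey2 0 = 0"
    and stable: "open N" "0 \<in> N" "jet z ` U \<inter> N = stable_loc H N"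
    and zt: "open Ut" "0 \<in> Ut" "Ck_on 2 Ut zt" "solves_HJ H Ut zt" "zt 0 = 0" "pd zt ex2 0 = 0" "pd zt ey2 0 = 0"
    and tangent: "pd2 zt ex2 ex2 0 = pd2 z ex2 ex2 0" "pd2 zt ex2 ey2 0 = pd2 z ex2 ey2 0"
      "pd2 zt ey2 ey2 0 = pd2 z ey2 ey2 0"
  shows "\<exists>W. open W \<and> 0 \<in> W \<and> W \<subseteq> U \<inter> Ut \<and> (\<forall>w\<in>W. zt w = z w)"
proof -
  interpret hj_solution_pair H z U zt Ut
    using H z zt tangent by unfold_locales auto
  show ?thesis by (rule eq_near_origin_if_stable[OF ne ev dist nz stable])
qed

text \<open>The unstable manifold of \<open>\<xi>\<^sub>H\<close> is the stable manifold of \<open>\<xi>\<^bsub>-H\<^esub> = - \<xi>\<^sub>H\<close>, and \<open>z\<close>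
  also solves the equation for \<open>-H\<close>.\<close>
lemma uniqueness_if_unstable:
  fixes H :: "R4 \<Rightarrow> real" and z zt :: "R2 \<Rightarrow> real"
  assumes H: "Ck_on 2 UNIV H" "\<And>v. pd H v 0 = 0"
    and ne: "e1 \<noteq> 0" "e2 \<noteq> 0" "e3 \<noteq> 0" "e4 \<noteq> 0"
    and ev: "frechet_derivative (xiH H) (at 0) e1 = l1 *\<^sub>R e1" "frechet_derivative (xiH H) (at 0) e2 = l2 *\<^sub>R e2"
      "frechet_derivative (xiH H) (at 0) e3 = l3 *\<^sub>R e3" "frechet_derivative (xiH H) (at 0) e4 = l4 *\<^sub>R e4"
    and dist: "distinct [l1, l2, l3, l4]" and nz: "0 \<notin> {l1, l2, l3, l4}"
    and z: "open U" "0 \<in> U" "Ck_on 2 U z" "solves_HJ H U z" "z 0 = 0" "pd z ex2 0 = 0" "pd z ey2 0 = 0"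
    and unstable: "open N" "0 \<in> N" "jet z ` U \<inter> N = unstable_loc H N"
    and zt: "open Ut" "0 \<in> Ut" "Ck_on 2 Ut zt" "solves_HJ H Ut zt" "zt 0 = 0" "pd zt ex2 0 = 0" "pd zt ey2 0 = 0"
    and tangent: "pd2 zt ex2 ex2 0 = pd2 z ex2 ex2 0" "pd2 zt ex2 ey2 0 = pd2 z ex2 ey2 0"
      "pd2 zt ey2 ey2 0 = pd2 z ey2 ey2 0"
  shows "\<exists>W. open W \<and> 0 \<in> W \<and> W \<subseteq> U \<inter> Ut \<and> (\<forall>w\<in>W. zt w = z w)"
proof -
  interpret hamiltonian H using H by unfold_locales
  have H': "Ck_on 2 UNIV (\<lambda>x. - H x)" "\<And>v. pd (\<lambda>x. - H x) v 0 = 0"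
    using Ck_on_uminus[OF H(1)] by (simp_all add: pd_uminus[OF differentiable] critical)
  have "frechet_derivative (xiH (\<lambda>x. - H x)) (at 0) = (\<lambda>v. - frechet_derivative (xiH H) (at 0) v)"
    unfolding xiH_uminus frechet_derivative_xi
    by (intro frechet_derivative_at[symmetric] has_derivative_minus xi_has_derivative)
  then have ev': "frechet_derivative (xiH (\<lambda>x. - H x)) (at 0) e1 = (- l1) *\<^sub>R e1"
    "frechet_derivative (xiH (\<lambda>x. - H x)) (at 0) e2 = (- l2) *\<^sub>R e2"
    "frechet_derivative (xiH (\<lambda>x. - H x)) (at 0) e3 = (- l3) *\<^sub>R e3"
    "frechet_derivative (xiH (\<lambda>x. - H x)) (at 0) e4 = (- l4) *\<^sub>R e4"
    using ev by simp_all
  have "distinct [- l1, - l2, - l3, - l4]" "0 \<notin> {- l1, - l2, - l3, - l4}" using dist nz by auto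
  moreover have "solves_HJ (\<lambda>x. - H x) U z" "solves_HJ (\<lambda>x. - H x) Ut zt"
    using z(4) zt(4) by (simp_all add: solves_HJ_def)
  ultimately show ?thesis
    using uniqueness_if_stable[OF H' ne ev'] z zt tangent unstable unstable_loc_eq_stable_loc_uminus by simp
qed

theorem theorem3p4:
  fixes H :: "R4 \<Rightarrow> real" and a b :: real and e1 e2 e3 e4 :: R4
    and z zt :: "R2 \<Rightarrow> real" and U Ut :: "R2 set"
  assumes H_smooth: "smooth_on UNIV H"
    and H0: "H 0 = 0"
    and crit: "nondeg_critical_0 H"
    and ab: "a > 0" "b > 0"
    and eig: "e1 \<noteq> 0" "e2 \<noteq> 0" "e3 \<noteq> 0" "e4 \<noteq> 0"
      "frechet_derivative (xiH H) (at 0) e1 = a *\<^sub>R e1"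
      "frechet_derivative (xiH H) (at 0) e2 = b *\<^sub>R e2"
      "frechet_derivative (xiH H) (at 0) e3 = (- a) *\<^sub>R e3"
      "frechet_derivative (xiH H) (at 0) e4 = (- b) *\<^sub>R e4"
    and Qind: "Q_indep a b"
    and proj_indep: "lin_indep2 (proj e1) (proj e2)" "lin_indep2 (proj e3) (proj e4)"
      "lin_indep2 (proj e1) (proj e4)" "lin_indep2 (proj e2) (proj e3)"
    and U: "open U" "0 \<in> U"
    and z_C2: "Ck_on 2 U z"
    and z_sol: "solves_HJ H U z"
    and z0: "z 0 = 0" "pd z ex2 0 = 0" "pd z ey2 0 = 0"
    and z_jet: "\<exists>N. open N \<and> 0 \<in> N \<and>
        (jet z ` U \<inter> N = stable_loc H N \<or> jet z ` U \<inter> N = unstable_loc H N)"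
    and Ut: "open Ut" "0 \<in> Ut"
    and zt_C2: "Ck_on 2 Ut zt"
    and zt_sol: "solves_HJ H Ut zt"
    and zt0: "zt 0 = 0" "pd zt ex2 0 = 0" "pd zt ey2 0 = 0"
    and tangent: "pd2 zt ex2 ex2 0 = pd2 z ex2 ex2 0"
      "pd2 zt ex2 ey2 0 = pd2 z ex2 ey2 0"
      "pd2 zt ey2 ey2 0 = pd2 z ey2 ey2 0"
  shows "\<exists>W. open W \<and> 0 \<in> W \<and> W \<subseteq> U \<inter> Ut \<and> (\<forall>w\<in>W. zt w = z w)"
proof -
  have H: "Ck_on 2 UNIV H" "\<And>v. pd H v 0 = 0"
    using H_smooth crit by (auto simp: smooth_on_def nondeg_critical_0_def)
  have "a \<noteq> b" using Qind[unfolded Q_indep_def, rule_format, of 1 "-1"] by auto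
  then have dist: "distinct [a, b, - a, - b]" and nz: "0 \<notin> {a, b, - a, - b}" using ab by auto
  obtain N where "open N" "0 \<in> N" "jet z ` U \<inter> N = stable_loc H N \<or> jet z ` U \<inter> N = unstable_loc H N"
    using z_jet by blast
  then show ?thesis
    using uniqueness_if_stable[OF H eig dist nz U z_C2 z_sol z0 _ _ _ Ut zt_C2 zt_sol zt0 tangent]
      uniqueness_if_unstable[OF H eig dist nz U z_C2 z_sol z0 _ _ _ Ut zt_C2 zt_sol zt0 tangent]
    by blast
qed

end
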